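(* Consider the Bradley–Terry–Luce model described in the context, with $\theta^*\in\Theta(\kappa)$, and suppose $\kappa=\mathcal{O}(1)$ and $np\gg\log n$. Let $\hat\theta$ be the MLE and $\delta_i=\hat\theta_i-\theta_i^*-b_i/d_i$, where $b_i=\sum_{j\ne i}A_{ij}(\bar y_{ij}-\psi(\theta_i^*-\theta_j^* ))$ and $d_i=\sum_{j\neq i}A_{ij}\psi'(\theta_i^*-\theta_j^* )$. Then with probability at least $1-\mathcal{O}(n^{-10})$, $$\Big|\frac1n\sum_{i=1}^n\delta_i\Big|\lesssim\frac{1}{\sqrt{npL}}\sqrt{\frac{\log n}{n}}=\mathfrak{o}\Big(\frac{1}{\sqrt{npL}}\Big).$$
   Context: Let $n\ge2$, $\psi(t)=e^t/(1+e^t)$, $\psi'(t)=e^t/(1+e^t)^2$. For $\kappa>0$ let $\Theta(\kappa)=\{\theta\in\mathbb{R}^n:\max_i\theta_i-\min_i\theta_i\le\kappa,\ \sum_{i}\theta_i=0\}$. BTL model: given $\theta^*\in\Theta(\kappa)$, $p\in(0,1]$ and a positive integer $L$, the $\{A_{ij}\}_{i<j}$ are i.i.d. Bernoulli$(p)$, $A_{ji}=A_{ij}$, $A_{ii}=0$; for each $i<j$ with $A_{ij}=1$ one observes $y_{ij\ell}$, $\ell=1,\dots,L$, i.i.d. Bernoulli$(\psi(\theta_i^*-\theta_j^* ))$, independent across pairs and of $A$. Put $\bar y_{ij}=L^{-1}\sum_\ell y_{ij\ell}$, $\bar y_{ji}=1-\bar y_{ij}$ for $i<j$. The MLE is $\hat\theta\in\arg\min_{\mathbf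 1_n^\top\theta=0}\sum_{i<j}A_{ij}\big[\bar y_{ij}\log\frac{1}{\psi(\theta_i-\theta_j)}+\bar y_{ji}\log\frac{1}{\psi(\theta_j-\theta_i)}\big]$. Asymptotics: $n\to\infty$; $p,L,\kappa,\theta^*$ may depend on $n$; $a_n\ll b_n$ means $a_n/b_n\to0$; $\kappa=\mathcal{O}(1)$ means bounded independently of $n$; $a\lesssim b$ means $a\le Cb$ for a constant $C$ independent of $n$ (possibly depending on the bound on $\kappa$); "probability at least $1-\mathcal{O}(n^{-10})$" means at least $1-Cn^{-10}$ with $C$ independent of $n$. *)

theory Defs
  imports "HOL-Probability.Probability"
begin

definition psi :: "real \<Rightarrow> real" where
  "psi t = exp t / (1 + exp t)"

definition psi' :: "real \<Rightarrow> real" where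
  "psi' t = exp t / (1 + exp t)^2"

definition Theta :: "nat \<Rightarrow> real \<Rightarrow> (nat \<Rightarrow> real) set" where
  "Theta n \<kappa> = {\<theta>. (\<forall>i<n. \<forall>j<n. \<theta> i - \<theta> j \<le> \<kappa>) \<and> (\<Sum>i<n. \<theta> i) = 0}"

definition pairs :: "nat \<Rightarrow> (nat \<times> nat) set" where
  "pairs n = {(i, j). i < j \<and> j < n}"

text \<open>An outcome assigns to each pair (i,j), i<j, the edge indicator A_ij and the
  comparison outcomes y_ij1, ..., y_ijL (generated always, used only when A_ij = 1).\<close>
type_synonym outcome = "nat \<times> nat \<Rightarrow> bool \<times> (nat \<Rightarrow> bool)"

definition btl_pmf :: "nat \<Rightarrow> real \<Rightarrow> nat \<Rightarrow> (nat \<Rightarrow> real) \<Rightarrow> outcome pmf" where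
  "btl_pmf n p L \<theta> =
     Pi_pmf (pairs n) (False, \<lambda>_. False)
       (\<lambda>(i, j). pair_pmf (bernoulli_pmf p)
                  (Pi_pmf {..<L} False (\<lambda>_. bernoulli_pmf (psi (\<theta> i - \<theta> j)))))"

definition Aadj :: "outcome \<Rightarrow> nat \<Rightarrow> nat \<Rightarrow> real" where
  "Aadj \<omega> i j = (if i < j then of_bool (fst (\<omega> (i, j)))
                 else if j < i then of_bool (fst (\<omega> (j, i))) else 0)"

definition ybar :: "nat \<Rightarrow> outcome \<Rightarrow> nat \<Rightarrow> nat \<Rightarrow> real" where
  "ybar L \<omega> i j = (if i < j then (\<Sum>l<L. of_bool (snd (\<omega> (i, j)) l)) / real L
                   else 1 - (\<Sum>l<L. of_bool (snd (\<omega> (j, i)) l)) / real L)"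

definition nll :: "nat \<Rightarrow> nat \<Rightarrow> outcome \<Rightarrow> (nat \<Rightarrow> real) \<Rightarrow> real" where
  "nll n L \<omega> \<theta> = (\<Sum>(i, j)\<in>pairs n. Aadj \<omega> i j *
      (ybar L \<omega> i j * ln (1 / psi (\<theta> i - \<theta> j)) + ybar L \<omega> j i * ln (1 / psi (\<theta> j - \<theta> i))))"

definition mle_set :: "nat \<Rightarrow> nat \<Rightarrow> outcome \<Rightarrow> (nat \<Rightarrow> real) set" where
  "mle_set n L \<omega> = {\<theta>. (\<Sum>i<n. \<theta> i) = 0 \<and>
      (\<forall>\<theta>'. (\<Sum>i<n. \<theta>' i) = 0 \<longrightarrow> nll n L \<omega> \<theta> \<le> nll n L \<omega> \<theta>')}"

definition bcoef :: "nat \<Rightarrow> nat \<Rightarrow> outcome \<Rightarrow> (nat \<Rightarrow> real) \<Rightarrow> nat \<Rightarrow> real" where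
  "bcoef n L \<omega> \<theta>s i = (\<Sum>j\<in>{..<n} - {i}. Aadj \<omega> i j * (ybar L \<omega> i j - psi (\<theta>s i - \<theta>s j)))"

definition dcoef :: "nat \<Rightarrow> outcome \<Rightarrow> (nat \<Rightarrow> real) \<Rightarrow> nat \<Rightarrow> real" where
  "dcoef n \<omega> \<theta>s i = (\<Sum>j\<in>{..<n} - {i}. Aadj \<omega> i j * psi' (\<theta>s i - \<theta>s j))"

definition delta :: "nat \<Rightarrow> nat \<Rightarrow> outcome \<Rightarrow> (nat \<Rightarrow> real) \<Rightarrow> (nat \<Rightarrow> real) \<Rightarrow> nat \<Rightarrow> real" where
  "delta n L \<omega> \<theta>s \<theta>h i = \<theta>h i - \<theta>s i - bcoef n L \<omega> \<theta>s i / dcoef n \<omega> \<theta>s i"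

end

theory Submission
  imports Defs
begin

(* Since the MLE and theta* both sum to zero, sum_i delta_i = - sum_i b_i / d_i; nothing else
   about the MLE is needed.  Grouping the two occurrences of each pair gives
     sum_i b_i / d_i = sum_{i<j} A_ij (ybar_ij - psi (theta*_i - theta*_j)) (1/d_i - 1/d_j).
   Conditionally on the comparison graph, the summands are independent centred averages of L
   Bernoulli variables, so by Hoeffding's lemma the sum is sub-Gaussian with variance proxy
   sum_{i<j} A_ij (1/d_i - 1/d_j)^2 / L = O(n / (L np)) as soon as every degree is at least
   np/4, and by a Chernoff bound this degree condition fails with probability O(n^-10) when
   np >> log n.  Hence |sum_i delta_i| = O(sqrt (log n / (pL))) with probability 1 - O(n^-10).
   For the MLE to exist it suffices that every proper nonempty set of items loses a comparison
   to an item outside it: then a large spread of theta forces a win across a large gap, which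
   makes the likelihood small, so the minimisation runs over a compact set.  A union bound over
   all cuts shows that this condition fails with probability O(n exp (-c np)). *)

lemma psi_gt_0: "0 < psi x" and psi_lt_1: "psi x < 1"
  unfolding psi_def by (auto simp: divide_simps add_pos_pos)

lemma psi_minus: "psi (- x) = 1 - psi x"
proof -
  have pos: "0 < 1 + exp x" by (simp add: add_pos_pos)
  have "psi (- x) = 1 / (1 + exp x)"
    unfolding psi_def exp_minus using pos by (simp add: field_simps)
  also have "\<dots> = 1 - psi x" unfolding psi_def using pos by (simp add: field_simps)
  finally show ?thesis .
qed

lemma inverse_psi: "1 / psi x = 1 + exp (- x)"
  unfolding psi_def by (simp add: field_simps exp_minus add_pos_pos)

lemma ln_inverse_psi_ge: "- x \<le> ln (1 / psi x)" and ln_inverse_psi_nonneg: "0 \<le> ln (1 / psi x)"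
proof -
  have pos: "0 < 1 + exp (- x)" by (simp add: add_pos_pos)
  have "ln (exp (- x)) \<le> ln (1 + exp (- x))" using pos by (subst ln_le_cancel_iff) auto
  then show "- x \<le> ln (1 / psi x)" by (simp add: inverse_psi)
  show "0 \<le> ln (1 / psi x)" by (simp add: inverse_psi)
qed

lemma psi_ge:
  assumes "\<bar>x\<bar> \<le> K" shows "1 / (2 * exp K) \<le> psi x"
proof -
  have "exp (- x) \<le> exp K" "1 \<le> exp K" using assms by auto
  then have "1 + exp (- x) \<le> 2 * exp K" by linarith
  then have "1 / (2 * exp K) \<le> 1 / (1 + exp (- x))"
    by (intro divide_left_mono) (auto simp: add_pos_pos)
  then show ?thesis by (simp flip: inverse_psi)
qed

lemma psi'_ge:
  assumes "\<bar>x\<bar> \<le> K" shows "1 / (4 * exp K) \<le> psi' x"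
proof -
  have "exp (- x) \<le> exp K" "exp x \<le> exp K" "1 \<le> exp K" using assms by auto
  then have "exp (- x) + 2 + exp x \<le> 4 * exp K" by linarith
  then have "1 / (4 * exp K) \<le> 1 / (exp (- x) + 2 + exp x)"
    by (intro divide_left_mono) (auto simp: add_pos_pos)
  also have "\<dots> = psi' x"
    unfolding psi'_def exp_minus by (simp add: field_simps power2_eq_square)
  finally show ?thesis .
qed

definition adjacency :: "(nat \<times> nat \<Rightarrow> bool) \<Rightarrow> nat \<Rightarrow> nat \<Rightarrow> real" where
  "adjacency a i j = (if i < j then of_bool (a (i, j)) else if j < i then of_bool (a (j, i)) else 0)"

lemma Aadj_eq_adjacency: "Aadj \<omega> = adjacency (\<lambda>q. fst (\<omega> q))"
  unfolding Aadj_def adjacency_def by auto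

lemma adjacency_commute: "adjacency a i j = adjacency a j i"
  unfolding adjacency_def by auto

lemma adjacency_nonneg: "0 \<le> adjacency a i j"
  unfolding adjacency_def by auto

lemma adjacency_eq_min_max: "j \<noteq> i \<Longrightarrow> adjacency a i j = of_bool (a (min i j, max i j))"
  unfolding adjacency_def by auto

definition sample_mean :: "nat \<Rightarrow> (nat \<Rightarrow> bool) \<Rightarrow> real" where
  "sample_mean L y = (\<Sum>l<L. of_bool (y l)) / real L"

lemma sample_mean_nonneg: "0 \<le> sample_mean L y"
  unfolding sample_mean_def by (simp add: sum_nonneg)

lemma sample_mean_le_1: "sample_mean L y \<le> 1"
proof -
  have "(\<Sum>l<L. of_bool (y l) :: real) \<le> real L"
    using sum_bounded_above[of "{..<L}" "\<lambda>l. of_bool (y l) :: real" 1] by auto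
  then show ?thesis unfolding sample_mean_def by (auto simp: divide_le_eq_1)
qed

lemma sample_mean_ge:
  assumes "l < L" "y l" shows "1 / real L \<le> sample_mean L y"
proof -
  have "(1 :: real) \<le> (\<Sum>l<L. of_bool (y l))"
    using member_le_sum[of l "{..<L}" "\<lambda>l. of_bool (y l) :: real"] assms by auto
  then show ?thesis unfolding sample_mean_def by (simp add: divide_right_mono)
qed

lemma sample_mean_le:
  assumes "l < L" "\<not> y l" shows "sample_mean L y \<le> 1 - 1 / real L"
proof -
  have "(\<Sum>l<L. of_bool (y l) :: real) = (\<Sum>l\<in>{..<L} - {l}. of_bool (y l))"
    using assms by (subst sum.remove[of _ l]) auto
  also have "\<dots> \<le> real L - 1"
    using sum_bounded_above[of "{..<L} - {l}" "\<lambda>l. of_bool (y l) :: real" 1] assms by auto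
  finally show ?thesis using assms unfolding sample_mean_def by (simp add: field_simps)
qed

lemma ybar_eq_sample_mean:
  "ybar L \<omega> i j = (if i < j then sample_mean L (snd (\<omega> (i, j)))
                    else 1 - sample_mean L (snd (\<omega> (j, i))))"
  unfolding ybar_def sample_mean_def ..

lemma ybar_nonneg: "0 \<le> ybar L \<omega> i j"
  unfolding ybar_eq_sample_mean using sample_mean_nonneg sample_mean_le_1 by (auto simp: not_le)

lemma ybar_swap: "i < j \<Longrightarrow> ybar L \<omega> j i = 1 - ybar L \<omega> i j"
  unfolding ybar_def by auto

lemma finite_pairs: "finite (pairs n)"
  by (rule finite_subset[of _ "{..<n} \<times> {..<n}"]) (auto simp: pairs_def)

lemma sum_offdiag_eq_sum_pairs:
  fixes F :: "nat \<Rightarrow> nat \<Rightarrow> 'a::comm_monoid_add"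
  shows "(\<Sum>i<n. \<Sum>j\<in>{..<n} - {i}. F i j) = (\<Sum>(i, j)\<in>pairs n. F i j + F j i)"
proof -
  have "(\<Sum>i<n. \<Sum>j\<in>{..<n} - {i}. F i j) = (\<Sum>(i, j)\<in>Sigma {..<n} (\<lambda>i. {..<n} - {i}). F i j)"
    by (rule sum.Sigma) auto
  also have "Sigma {..<n} (\<lambda>i. {..<n} - {i}) = pairs n \<union> prod.swap ` pairs n"
    unfolding pairs_def by (auto simp: image_iff)
  also have "(\<Sum>(i, j)\<in>pairs n \<union> prod.swap ` pairs n. F i j) =
      (\<Sum>(i, j)\<in>pairs n. F i j) + (\<Sum>(i, j)\<in>prod.swap ` pairs n. F i j)"
    by (intro sum.union_disjoint finite_pairs finite_imageI) (auto simp: pairs_def)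
  also have "(\<Sum>(i, j)\<in>prod.swap ` pairs n. F i j) = (\<Sum>(i, j)\<in>pairs n. F j i)"
    by (subst sum.reindex) (auto intro: inj_onI simp: case_prod_unfold)
  finally show ?thesis by (simp add: sum.distrib[symmetric] case_prod_unfold)
qed

section \<open>Existence of the maximum likelihood estimator\<close>

definition nll_term :: "nat \<Rightarrow> outcome \<Rightarrow> (nat \<Rightarrow> real) \<Rightarrow> nat \<Rightarrow> nat \<Rightarrow> real" where
  "nll_term L \<omega> \<theta> i j = Aadj \<omega> i j *
      (ybar L \<omega> i j * ln (1 / psi (\<theta> i - \<theta> j)) + ybar L \<omega> j i * ln (1 / psi (\<theta> j - \<theta> i)))"

lemma nll_eq_sum_nll_term: "nll n L \<omega> \<theta> = (\<Sum>(i, j)\<in>pairs n. nll_term L \<omega> \<theta> i j)"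
  unfolding nll_def nll_term_def ..

lemma nll_term_commute: "nll_term L \<omega> \<theta> i j = nll_term L \<omega> \<theta> j i"
  unfolding nll_term_def Aadj_eq_adjacency by (simp add: adjacency_commute[of _ i j] algebra_simps)

lemma nll_term_nonneg: "0 \<le> nll_term L \<omega> \<theta> i j"
  unfolding nll_term_def Aadj_eq_adjacency
  by (intro mult_nonneg_nonneg add_nonneg_nonneg adjacency_nonneg ybar_nonneg ln_inverse_psi_nonneg)

lemma nll_nonneg: "0 \<le> nll n L \<omega> \<theta>"
  unfolding nll_eq_sum_nll_term by (intro sum_nonneg) (auto intro: nll_term_nonneg)

lemma nll_term_le_nll:
  assumes "u < n" "v < n" "u \<noteq> v"
  shows "nll_term L \<omega> \<theta> u v \<le> nll n L \<omega> \<theta>"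
proof -
  have uv: "(min u v, max u v) \<in> pairs n" using assms unfolding pairs_def by auto
  have "nll_term L \<omega> \<theta> u v = nll_term L \<omega> \<theta> (min u v) (max u v)"
    by (cases "u < v") (auto simp: min_def max_def nll_term_commute)
  also have "\<dots> \<le> (\<Sum>(i, j)\<in>pairs n. nll_term L \<omega> \<theta> i j)"
    using member_le_sum[OF uv, of "\<lambda>(i, j). nll_term L \<omega> \<theta> i j"]
    by (auto intro: nll_term_nonneg simp: finite_pairs)
  finally show ?thesis by (simp add: nll_eq_sum_nll_term)
qed

lemma nll_cong: "(\<And>i. i < n \<Longrightarrow> \<theta> i = \<theta>' i) \<Longrightarrow> nll n L \<omega> \<theta> = nll n L \<omega> \<theta>'"
  unfolding nll_def by (intro sum.cong) (auto simp: pairs_def)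

lemma continuous_on_coordinate: "continuous_on S (\<lambda>\<theta>::nat \<Rightarrow> real. \<theta> i)"
  by (rule continuous_on_subset[OF continuous_on_product_coordinates]) simp

lemma continuous_on_nll: "continuous_on S (nll n L \<omega>)"
proof -
  have pos: "1 + exp y \<noteq> (0::real)" for y by (smt (verit) exp_gt_zero)
  have "continuous_on S (\<lambda>\<theta>::nat \<Rightarrow> real. ln (1 + exp (- (\<theta> i - \<theta> j))))" for i j
    by (intro continuous_on_ln continuous_intros continuous_on_coordinate) (simp add: pos)
  then show ?thesis
    unfolding nll_def inverse_psi case_prod_unfold
    by (intro continuous_on_sum continuous_on_mult continuous_on_add continuous_on_const)
qed

text \<open>\<open>u\<close> beats \<open>v\<close> if it won at least one of their \<open>L\<close> comparisons.\<close>

definition beats :: "nat \<Rightarrow> outcome \<Rightarrow> nat \<Rightarrow> nat \<Rightarrow> bool" where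
  "beats L \<omega> u v \<longleftrightarrow> Aadj \<omega> u v = 1 \<and> 1 / real L \<le> ybar L \<omega> u v"

definition cuts :: "nat \<Rightarrow> nat set set" where
  "cuts n = {S. S \<subseteq> {..<n} \<and> S \<noteq> {} \<and> S \<noteq> {..<n}}"

lemma finite_cuts: "finite (cuts n)"
  unfolding cuts_def by (rule finite_subset[of _ "Pow {..<n}"]) auto

definition beats_connected :: "nat \<Rightarrow> nat \<Rightarrow> outcome \<Rightarrow> bool" where
  "beats_connected n L \<omega> \<longleftrightarrow> (\<forall>S\<in>cuts n. \<exists>u\<in>{..<n} - S. \<exists>v\<in>S. beats L \<omega> u v)"

lemma nll_term_ge_if_beats:
  assumes "beats L \<omega> u v"
  shows "(\<theta> v - \<theta> u) / real L \<le> nll_term L \<omega> \<theta> u v"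
proof -
  have A: "Aadj \<omega> u v = 1" and y: "1 / real L \<le> ybar L \<omega> u v"
    using assms unfolding beats_def by auto
  have "(\<theta> v - \<theta> u) / real L \<le> (1 / real L) * ln (1 / psi (\<theta> u - \<theta> v))"
    using ln_inverse_psi_ge[of "\<theta> u - \<theta> v"] by (simp add: divide_right_mono)
  also have "\<dots> \<le> ybar L \<omega> u v * ln (1 / psi (\<theta> u - \<theta> v))"
    by (rule mult_right_mono[OF y ln_inverse_psi_nonneg])
  also have "\<dots> \<le> nll_term L \<omega> \<theta> u v"
    unfolding nll_term_def A
    using mult_nonneg_nonneg[OF ybar_nonneg ln_inverse_psi_nonneg, of L \<omega> v u "\<theta> v - \<theta> u"] by simp
  finally show ?thesis .
qed

text \<open>Pigeonhole: the \<open>n - 1\<close> values other than \<open>f a\<close> cannot meet all \<open>n\<close> slots of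
  width \<open>D\<close> above \<open>f b\<close>.\<close>

lemma exists_empty_slot:
  fixes f :: "nat \<Rightarrow> real"
  assumes a: "a < n" and big: "real n * D < f a - f b" and D: "0 < D"
  shows "\<exists>k<n. \<forall>r<n. \<not> (f b + real k * D < f r \<and> f r \<le> f b + (real k + 1) * D)"
proof (rule ccontr)
  define slot where "slot r = nat \<lceil>(f r - f b) / D\<rceil> - 1" for r
  assume "\<not> ?thesis"
  then have hit: "\<forall>k<n. \<exists>r<n. f b + real k * D < f r \<and> f r \<le> f b + (real k + 1) * D" by blast
  have "{..<n} \<subseteq> slot ` ({..<n} - {a})"
  proof
    fix k assume "k \<in> {..<n}"
    then obtain r where k: "k < n" and r: "r < n" and r1: "f b + real k * D < f r"
      and r2: "f r \<le> f b + (real k + 1) * D" using hit by auto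
    have "(real k + 1) * D \<le> real n * D" using k D by (intro mult_right_mono) auto
    then have ra: "r \<noteq> a" using r2 big by auto
    have "\<lceil>(f r - f b) / D\<rceil> = int k + 1"
      using r1 r2 D by (subst ceiling_eq_iff) (auto simp: field_simps)
    then have "slot r = k" unfolding slot_def by simp
    then show "k \<in> slot ` ({..<n} - {a})" using r ra by auto
  qed
  then have "n \<le> card ({..<n} - {a})"
    using surj_card_le[of "{..<n} - {a}" "{..<n}" slot] by auto
  then show False using a by simp
qed

text \<open>If the values spread by more than \<open>n D\<close>, some slot of width \<open>D\<close> is empty; the win across
  the cut at that slot costs more than \<open>D / L\<close>.\<close>

lemma spread_le_nll:
  assumes L: "1 \<le> L" and conn: "beats_connected n L \<omega>" and a: "a < n" and b: "b < n"
  shows "\<theta> a - \<theta> b \<le> real n * (real L * nll n L \<omega> \<theta> + 1)"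
proof (rule ccontr)
  define D where "D = real L * nll n L \<omega> \<theta> + 1"
  have D: "0 < D" unfolding D_def by (simp add: add_nonneg_pos nll_nonneg)
  assume "\<not> ?thesis"
  then have big: "real n * D < \<theta> a - \<theta> b" unfolding D_def by simp
  obtain k where k: "k < n" and empty: "\<forall>r<n. \<not> (\<theta> b + real k * D < \<theta> r \<and> \<theta> r \<le> \<theta> b + (real k + 1) * D)"
    using exists_empty_slot[OF a big D] by blast
  define S where "S = {r \<in> {..<n}. \<theta> b + real k * D < \<theta> r}"
  have "real k * D \<le> real n * D" using k D by (intro mult_right_mono) auto
  then have "a \<in> S" using big a unfolding S_def by simp
  moreover have "b \<notin> S" using D by (simp add: S_def not_less)
  moreover have "S \<subseteq> {..<n}" by (auto simp: S_def)
  ultimately obtain u v where u: "u \<in> {..<n} - S" and v: "v \<in> S" and uv: "beats L \<omega> u v"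
    using conn b unfolding beats_connected_def cuts_def by blast
  have "\<theta> b + (real k + 1) * D < \<theta> v" using v empty by (auto simp: S_def)
  moreover have "\<theta> u \<le> \<theta> b + real k * D" using u by (auto simp: S_def)
  ultimately have "D < \<theta> v - \<theta> u" by (simp add: algebra_simps)
  then have "D / real L < (\<theta> v - \<theta> u) / real L"
    using L by (intro divide_strict_right_mono) auto
  also have "\<dots> \<le> nll_term L \<omega> \<theta> u v" by (rule nll_term_ge_if_beats[OF uv])
  also have "\<dots> \<le> nll n L \<omega> \<theta>" using u v by (intro nll_term_le_nll) (auto simp: S_def)
  finally have "D / real L < nll n L \<omega> \<theta>" .
  moreover have "D / real L = nll n L \<omega> \<theta> + 1 / real L" using L by (simp add: D_def field_simps)
  ultimately show False using L by (simp add: field_simps)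
qed

lemma abs_le_nll:
  assumes L: "1 \<le> L" and conn: "beats_connected n L \<omega>" and centred: "(\<Sum>i<n. \<theta> i) = 0"
    and i: "i < n"
  shows "\<bar>\<theta> i\<bar> \<le> real n * (real L * nll n L \<omega> \<theta> + 1)"
proof -
  define R where "R = real n * (real L * nll n L \<omega> \<theta> + 1)"
  have spread: "\<bar>\<theta> i - \<theta> j\<bar> \<le> R" if "j < n" for j
    using spread_le_nll[OF L conn i that, of \<theta>] spread_le_nll[OF L conn that i, of \<theta>]
    unfolding R_def by auto
  have "real n * \<theta> i = (\<Sum>j<n. \<theta> i - \<theta> j)" using centred by (simp add: sum_subtractf)
  then have "\<bar>real n * \<theta> i\<bar> \<le> (\<Sum>j<n. \<bar>\<theta> i - \<theta> j\<bar>)" by (metis sum_abs)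
  also have "\<dots> \<le> (\<Sum>j<n. R)" by (intro sum_mono spread) simp
  finally have "real n * \<bar>\<theta> i\<bar> \<le> real n * R" by (simp add: abs_mult)
  then show ?thesis using i unfolding R_def by simp
qed

lemma mem_PiE_box_iff:
  fixes \<theta> :: "nat \<Rightarrow> real"
  shows "\<theta> \<in> PiE UNIV (\<lambda>i. if i < n then {-R..R} else {0}) \<longleftrightarrow> (\<forall>i<n. \<bar>\<theta> i\<bar> \<le> R) \<and> (\<forall>i\<ge>n. \<theta> i = 0)"
proof
  assume "\<theta> \<in> PiE UNIV (\<lambda>i. if i < n then {-R..R} else {0})"
  then have mem: "\<theta> i \<in> (if i < n then {-R..R} else {0})" for i by (rule PiE_mem) simp
  show "(\<forall>i<n. \<bar>\<theta> i\<bar> \<le> R) \<and> (\<forall>i\<ge>n. \<theta> i = 0)"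
  proof (intro conjI allI impI)
    fix i assume "i < n" then show "\<bar>\<theta> i\<bar> \<le> R" using mem[of i] by (simp add: abs_le_iff)
  next
    fix i assume "n \<le> i" then show "\<theta> i = 0" using mem[of i] by simp
  qed
qed (auto simp: PiE_UNIV_domain abs_le_iff not_less minus_le_iff)

lemma compact_centred_box:
  "compact {\<theta> :: nat \<Rightarrow> real. (\<forall>i<n. \<bar>\<theta> i\<bar> \<le> R) \<and> (\<forall>i\<ge>n. \<theta> i = 0) \<and> (\<Sum>i<n. \<theta> i) = 0}"
proof -
  define B :: "(nat \<Rightarrow> real) set" where "B = PiE UNIV (\<lambda>i. if i < n then {-R..R} else {0})"
  have "compactin (product_topology (\<lambda>i. euclidean) UNIV) B"
    unfolding B_def compactin_PiE by auto
  then have "compact B" unfolding euclidean_product_topology by simp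
  moreover have "closed {\<theta>::nat \<Rightarrow> real. (\<Sum>i<n. \<theta> i) = 0}"
    by (intro closed_Collect_eq continuous_intros continuous_on_coordinate)
  ultimately have "compact (B \<inter> {\<theta>. (\<Sum>i<n. \<theta> i) = 0})" by (rule compact_Int_closed)
  also have "B \<inter> {\<theta>. (\<Sum>i<n. \<theta> i) = 0} =
      {\<theta>. (\<forall>i<n. \<bar>\<theta> i\<bar> \<le> R) \<and> (\<forall>i\<ge>n. \<theta> i = 0) \<and> (\<Sum>i<n. \<theta> i) = 0}"
    by (rule set_eqI) (simp only: B_def Int_iff mem_Collect_eq mem_PiE_box_iff conj_assoc)
  finally show ?thesis .
qed

lemma mle_set_nonempty:
  assumes L: "1 \<le> L" and conn: "beats_connected n L \<omega>"
  shows "mle_set n L \<omega> \<noteq> {}"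
proof -
  define R where "R = real n * (real L * nll n L \<omega> (\<lambda>_. 0) + 1)"
  define F where "F = {\<theta> :: nat \<Rightarrow> real. (\<forall>i<n. \<bar>\<theta> i\<bar> \<le> R) \<and> (\<forall>i\<ge>n. \<theta> i = 0) \<and> (\<Sum>i<n. \<theta> i) = 0}"
  have zero: "(\<lambda>_. 0) \<in> F" unfolding F_def R_def by (simp add: nll_nonneg)
  have "compact F" unfolding F_def by (rule compact_centred_box)
  moreover have "F \<noteq> {}" using zero by blast
  ultimately obtain \<theta>m where m: "\<theta>m \<in> F" and min: "\<And>\<theta>. \<theta> \<in> F \<Longrightarrow> nll n L \<omega> \<theta>m \<le> nll n L \<omega> \<theta>"
    using continuous_attains_inf[of F "nll n L \<omega>"] continuous_on_nll by blast
  have minimal: "nll n L \<omega> \<theta>m \<le> nll n L \<omega> \<theta>" if centred: "(\<Sum>i<n. \<theta> i) = 0" for \<theta>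
  proof (cases "nll n L \<omega> (\<lambda>_. 0) \<le> nll n L \<omega> \<theta>")
    case True
    then show ?thesis using min[OF zero] by simp
  next
    case False
    define \<theta>' where "\<theta>' i = (if i < n then \<theta> i else 0)" for i
    have "\<bar>\<theta> i\<bar> \<le> R" if "i < n" for i
    proof -
      have "\<bar>\<theta> i\<bar> \<le> real n * (real L * nll n L \<omega> \<theta> + 1)"
        by (rule abs_le_nll[OF L conn centred that])
      also have "\<dots> \<le> R" unfolding R_def using False
        by (intro mult_left_mono add_right_mono) auto
      finally show ?thesis .
    qed
    moreover have "(\<Sum>i<n. \<theta>' i) = 0" using centred by (simp add: \<theta>'_def)
    ultimately have "\<theta>' \<in> F" unfolding F_def by (simp add: \<theta>'_def)
    then have "nll n L \<omega> \<theta>m \<le> nll n L \<omega> \<theta>'" by (rule min)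
    also have "\<dots> = nll n L \<omega> \<theta>" by (rule nll_cong) (simp add: \<theta>'_def)
    finally show ?thesis .
  qed
  have "(\<Sum>i<n. \<theta>m i) = 0" using m unfolding F_def by blast
  then have "\<theta>m \<in> mle_set n L \<omega>" using minimal unfolding mle_set_def by blast
  then show ?thesis by auto
qed

definition residual_sum :: "nat \<Rightarrow> nat \<Rightarrow> outcome \<Rightarrow> (nat \<Rightarrow> real) \<Rightarrow> real" where
  "residual_sum n L \<omega> \<theta> = (\<Sum>(i, j)\<in>pairs n. Aadj \<omega> i j * (ybar L \<omega> i j - psi (\<theta> i - \<theta> j)) *
       (1 / dcoef n \<omega> \<theta> i - 1 / dcoef n \<omega> \<theta> j))"

lemma sum_bcoef_div_dcoef:
  "(\<Sum>i<n. bcoef n L \<omega> \<theta> i / dcoef n \<omega> \<theta> i) = residual_sum n L \<omega> \<theta>"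
proof -
  define F where "F i j = Aadj \<omega> i j * (ybar L \<omega> i j - psi (\<theta> i - \<theta> j)) / dcoef n \<omega> \<theta> i" for i j
  have "(\<Sum>i<n. bcoef n L \<omega> \<theta> i / dcoef n \<omega> \<theta> i) = (\<Sum>i<n. \<Sum>j\<in>{..<n} - {i}. F i j)"
    unfolding bcoef_def F_def by (simp add: sum_divide_distrib)
  also have "\<dots> = (\<Sum>(i, j)\<in>pairs n. F i j + F j i)" by (rule sum_offdiag_eq_sum_pairs)
  also have "\<dots> = residual_sum n L \<omega> \<theta>"
    unfolding residual_sum_def
  proof (intro sum.cong refl, clarify)
    fix i j assume "(i, j) \<in> pairs n"
    then have "i < j" unfolding pairs_def by auto
    have ps: "psi (\<theta> j - \<theta> i) = 1 - psi (\<theta> i - \<theta> j)" using psi_minus[of "\<theta> i - \<theta> j"] by simp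
    show "F i j + F j i = Aadj \<omega> i j * (ybar L \<omega> i j - psi (\<theta> i - \<theta> j)) *
       (1 / dcoef n \<omega> \<theta> i - 1 / dcoef n \<omega> \<theta> j)"
      unfolding F_def ybar_swap[OF \<open>i < j\<close>] Aadj_eq_adjacency adjacency_commute[of _ j i] ps
      by (simp add: divide_inverse algebra_simps)
  qed
  finally show ?thesis .
qed

lemma sum_delta_eq:
  assumes "\<theta>h \<in> mle_set n L \<omega>" "(\<Sum>i<n. \<theta> i) = 0"
  shows "(\<Sum>i<n. delta n L \<omega> \<theta> \<theta>h i) = - residual_sum n L \<omega> \<theta>"
  using assms unfolding delta_def mle_set_def sum_bcoef_div_dcoef[symmetric] sum_subtractf by simp

section \<open>Concentration inequalities\<close>

lemma prob_ge_le_mgf: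
  fixes X :: "'a \<Rightarrow> real"
  assumes "finite (set_pmf M)" "0 < s"
  shows "measure_pmf.prob M {x. t \<le> X x} \<le> exp (- s * t) * measure_pmf.expectation M (\<lambda>x. exp (s * X x))"
  using measure_pmf.Chernoff_ineq_ge[OF assms(2), of M UNIV X t] assms(1)
  by (simp add: integrable_measure_pmf_finite set_integrable_def set_lebesgue_integral_def)

lemma Hoeffdings_lemma_pmf:
  fixes f :: "'a \<Rightarrow> real"
  assumes fin: "finite (set_pmf M)" and range: "\<And>x. x \<in> set_pmf M \<Longrightarrow> f x \<in> {a..b}"
  shows "measure_pmf.expectation M (\<lambda>x. exp (t * (f x - measure_pmf.expectation M f)))
           \<le> exp (t\<^sup>2 * (b - a)\<^sup>2 / 8)"
proof -
  have positive: "measure_pmf.expectation M (\<lambda>x. exp (s * (g x - measure_pmf.expectation M g)))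
      \<le> exp (s\<^sup>2 * (d - c)\<^sup>2 / 8)"
    if s: "0 < s" and g: "\<And>x. x \<in> set_pmf M \<Longrightarrow> g x \<in> {c..d}" for s and g :: "'a \<Rightarrow> real" and c d
  proof -
    interpret interval_bounded_random_variable "measure_pmf M" g c d
      by (intro interval_bounded_random_variable.intro interval_bounded_random_variable_axioms.intro
          measure_pmf.prob_space_axioms AE_pmfI) (use g in auto)
    have "ennreal (measure_pmf.expectation M (\<lambda>x. exp (s * (g x - measure_pmf.expectation M g))))
        = (\<integral>\<^sup>+x. ennreal (exp (s * (g x - measure_pmf.expectation M g))) \<partial>M)"
      by (intro nn_integral_eq_integral[symmetric] integrable_measure_pmf_finite fin) auto
    also have "\<dots> \<le> ennreal (exp (s\<^sup>2 * (d - c)\<^sup>2 / 8))"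
      by (rule Hoeffdings_lemma_nn_integral[OF s])
    finally show ?thesis by simp
  qed
  consider "0 < t" | "t = 0" | "t < 0" by linarith
  then show ?thesis
  proof cases
    case 1
    then show ?thesis by (rule positive[OF _ range])
  next
    case 2
    then show ?thesis by simp
  next
    case 3
    have "measure_pmf.expectation M (\<lambda>x. exp ((- t) * (- f x - measure_pmf.expectation M (\<lambda>x. - f x))))
        \<le> exp ((- t)\<^sup>2 * (- a - - b)\<^sup>2 / 8)"
      using 3 range by (intro positive) force+
    then show ?thesis by (simp add: power2_commute right_diff_distrib)
  qed
qed

lemma mgf_sample_mean_le:
  assumes r: "0 \<le> r" "r \<le> 1" and L: "1 \<le> L"
  shows "measure_pmf.expectation (Pi_pmf {..<L} False (\<lambda>_. bernoulli_pmf r))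
           (\<lambda>y. exp (s * (sample_mean L y - r))) \<le> exp (s\<^sup>2 / (8 * real L))"
proof -
  have bernoulli: "measure_pmf.expectation (bernoulli_pmf r) (\<lambda>b. exp (t * (of_bool b - r)))
      \<le> exp (t\<^sup>2 / 8)"
    for t using Hoeffdings_lemma_pmf[of "bernoulli_pmf r" "\<lambda>b. of_bool b" 0 1 t] r by simp
  have factor: "exp (s * (sample_mean L y - r)) = (\<Prod>l<L. exp (s / real L * (of_bool (y l) - r)))" for y
  proof -
    have "(\<Sum>l<L. s / real L * (of_bool (y l) - r)) = s / real L * (\<Sum>l<L. of_bool (y l) - r)"
      by (rule sum_distrib_left[symmetric])
    also have "(\<Sum>l<L. of_bool (y l) - r) = (\<Sum>l<L. of_bool (y l)) - real L * r"
      unfolding sum_subtractf by simp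
    also have "s / real L * ((\<Sum>l<L. of_bool (y l)) - real L * r) = s * (sample_mean L y - r)"
      using L by (simp add: sample_mean_def field_simps)
    finally show ?thesis by (simp add: exp_sum[symmetric])
  qed
  have "measure_pmf.expectation (Pi_pmf {..<L} False (\<lambda>_. bernoulli_pmf r))
          (\<lambda>y. exp (s * (sample_mean L y - r)))
      = (\<Prod>l<L. measure_pmf.expectation (bernoulli_pmf r) (\<lambda>b. exp (s / real L * (of_bool b - r))))"
    unfolding factor by (intro expectation_prod_Pi_pmf integrable_measure_pmf_finite) auto
  also have "\<dots> \<le> (\<Prod>l<L. exp ((s / real L)\<^sup>2 / 8))"
    by (intro prod_mono conjI bernoulli integral_nonneg_AE AE_pmfI) auto
  also have "\<dots> = exp (s\<^sup>2 / (8 * real L))"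
    using L by (simp add: exp_of_nat_mult[symmetric] power2_eq_square field_simps)
  finally show ?thesis .
qed

lemma prob_abs_ge_le_of_mgf:
  fixes X :: "'a \<Rightarrow> real"
  assumes fin: "finite (set_pmf M)" and V: "0 < V" and t: "0 \<le> t"
    and mgf: "\<And>s. measure_pmf.expectation M (\<lambda>x. exp (s * X x)) \<le> exp (s\<^sup>2 * V / 8)"
  shows "measure_pmf.prob M {x. t \<le> \<bar>X x\<bar>} \<le> 2 * exp (- 2 * t\<^sup>2 / V)"
proof (cases "t = 0")
  case True
  then show ?thesis using measure_pmf.prob_le_1[of M] by simp
next
  case False
  define s where "s = 4 * t / V"
  have s: "0 < s" using False t V by (simp add: s_def)
  have one_sided: "measure_pmf.prob M {x. t \<le> Y x} \<le> exp (- 2 * t\<^sup>2 / V)"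
    if mgf_Y: "\<And>s. measure_pmf.expectation M (\<lambda>x. exp (s * Y x)) \<le> exp (s\<^sup>2 * V / 8)" for Y
  proof -
    have "measure_pmf.prob M {x. t \<le> Y x}
        \<le> exp (- s * t) * measure_pmf.expectation M (\<lambda>x. exp (s * Y x))"
      by (rule prob_ge_le_mgf[OF fin s])
    also have "\<dots> \<le> exp (- s * t) * exp (s\<^sup>2 * V / 8)" by (intro mult_left_mono mgf_Y) auto
    also have "\<dots> = exp (- 2 * t\<^sup>2 / V)"
      using V by (simp add: exp_add[symmetric] s_def field_simps power2_eq_square)
    finally show ?thesis .
  qed
  have "measure_pmf.prob M {x. t \<le> \<bar>X x\<bar>} \<le> measure_pmf.prob M ({x. t \<le> X x} \<union> {x. t \<le> - X x})"
    by (intro measure_pmf.finite_measure_mono) auto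
  also have "\<dots> \<le> measure_pmf.prob M {x. t \<le> X x} + measure_pmf.prob M {x. t \<le> - X x}"
    by (simp add: measure_Un_le)
  also have "\<dots> \<le> 2 * exp (- 2 * t\<^sup>2 / V)"
  proof -
    have "measure_pmf.prob M {x. t \<le> X x} \<le> exp (- 2 * t\<^sup>2 / V)" by (rule one_sided[OF mgf])
    moreover have "measure_pmf.prob M {x. t \<le> - X x} \<le> exp (- 2 * t\<^sup>2 / V)"
    proof (rule one_sided)
      fix s show "measure_pmf.expectation M (\<lambda>x. exp (s * - X x)) \<le> exp (s\<^sup>2 * V / 8)"
        using mgf[of "- s"] by simp
    qed
    ultimately show ?thesis by simp
  qed
  finally show ?thesis .
qed

lemma prob_bind_pmf_le:
  assumes N: "\<And>x. x \<in> set_pmf M \<Longrightarrow> x \<notin> B \<Longrightarrow> measure_pmf.prob (N x) A \<le> \<epsilon>" and \<epsilon>: "0 \<le> \<epsilon>"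
  shows "measure_pmf.prob (bind_pmf M N) A \<le> measure_pmf.prob M B + \<epsilon>"
proof -
  have "emeasure (N x) A \<le> indicator B x + ennreal \<epsilon>" if "x \<in> set_pmf M" for x
  proof (cases "x \<in> B")
    case True
    then show ?thesis using measure_pmf.emeasure_le_1[of "N x" A] by (simp add: add_increasing2)
  next
    case False
    then show ?thesis using N[OF that] by (simp add: measure_pmf.emeasure_eq_measure ennreal_leI)
  qed
  then have "emeasure (bind_pmf M N) A \<le> (\<integral>\<^sup>+x. indicator B x + ennreal \<epsilon> \<partial>M)"
    by (simp add: nn_integral_mono_AE AE_pmfI)
  also have "\<dots> = emeasure M B + ennreal \<epsilon>"
    by (simp add: nn_integral_add measure_pmf.emeasure_space_1)
  finally show ?thesis
    using \<epsilon> by (simp add: measure_pmf.emeasure_eq_measure ennreal_plus[symmetric] del: ennreal_plus)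
qed

section \<open>Conditioning on the comparison graph\<close>

definition edges_pmf :: "nat \<Rightarrow> real \<Rightarrow> (nat \<times> nat \<Rightarrow> bool) pmf" where
  "edges_pmf n p = Pi_pmf (pairs n) False (\<lambda>_. bernoulli_pmf p)"

definition comparisons_pmf :: "nat \<Rightarrow> (nat \<Rightarrow> real) \<Rightarrow> nat \<times> nat \<Rightarrow> (nat \<Rightarrow> bool) pmf" where
  "comparisons_pmf L \<theta> q = Pi_pmf {..<L} False (\<lambda>_. bernoulli_pmf (psi (\<theta> (fst q) - \<theta> (snd q))))"

definition btl_given_edges :: "nat \<Rightarrow> nat \<Rightarrow> (nat \<Rightarrow> real) \<Rightarrow> (nat \<times> nat \<Rightarrow> bool) \<Rightarrow> outcome pmf" where
  "btl_given_edges n L \<theta> a =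
     Pi_pmf (pairs n) (False, \<lambda>_. False) (\<lambda>q. map_pmf (Pair (a q)) (comparisons_pmf L \<theta> q))"

lemma btl_pmf_eq_Pi_pmf:
  "btl_pmf n p L \<theta> =
     Pi_pmf (pairs n) (False, \<lambda>_. False) (\<lambda>q. pair_pmf (bernoulli_pmf p) (comparisons_pmf L \<theta> q))"
  unfolding btl_pmf_def comparisons_pmf_def case_prod_unfold ..

lemma btl_pmf_eq_bind: "btl_pmf n p L \<theta> = bind_pmf (edges_pmf n p) (btl_given_edges n L \<theta>)"
proof -
  have "btl_pmf n p L \<theta> = Pi_pmf (pairs n) (False, \<lambda>_. False)
      (\<lambda>q. bind_pmf (bernoulli_pmf p) (\<lambda>e. map_pmf (Pair e) (comparisons_pmf L \<theta> q)))"
    unfolding btl_pmf_eq_Pi_pmf pair_pmf_def map_pmf_def by simp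
  also have "\<dots> = bind_pmf (edges_pmf n p) (btl_given_edges n L \<theta>)"
    unfolding edges_pmf_def btl_given_edges_def by (rule Pi_pmf_bind[OF finite_pairs])
  finally show ?thesis .
qed

lemma finite_set_pmf_Pi_pmf:
  assumes "finite A" "\<And>x. x \<in> A \<Longrightarrow> finite (set_pmf (P x))"
  shows "finite (set_pmf (Pi_pmf A d P))"
  using assms by (subst set_Pi_pmf) (auto intro!: finite_PiE_dflt)

lemma finite_set_comparisons_pmf: "finite (set_pmf (comparisons_pmf L \<theta> q))"
  unfolding comparisons_pmf_def by (intro finite_set_pmf_Pi_pmf) auto

lemma finite_set_btl_given_edges: "finite (set_pmf (btl_given_edges n L \<theta> a))"
  unfolding btl_given_edges_def
  by (intro finite_set_pmf_Pi_pmf finite_pairs) (auto simp: finite_set_comparisons_pmf)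

lemma edge_on_set_btl_given_edges:
  assumes "\<omega> \<in> set_pmf (btl_given_edges n L \<theta> a)" "q \<in> pairs n"
  shows "fst (\<omega> q) = a q"
proof -
  have "\<omega> \<in> PiE_dflt (pairs n) (False, \<lambda>_. False)
      (set_pmf \<circ> (\<lambda>q. map_pmf (Pair (a q)) (comparisons_pmf L \<theta> q)))"
    using assms(1) unfolding btl_given_edges_def set_Pi_pmf[OF finite_pairs] .
  then have "\<omega> q \<in> (set_pmf \<circ> (\<lambda>q. map_pmf (Pair (a q)) (comparisons_pmf L \<theta> q))) q"
    using assms(2) unfolding PiE_dflt_def by blast
  then show ?thesis by auto
qed

definition node_degree :: "nat \<Rightarrow> (nat \<times> nat \<Rightarrow> bool) \<Rightarrow> nat \<Rightarrow> real" where
  "node_degree n a i = (\<Sum>j\<in>{..<n} - {i}. adjacency a i j)"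

definition weighted_degree :: "nat \<Rightarrow> (nat \<times> nat \<Rightarrow> bool) \<Rightarrow> (nat \<Rightarrow> real) \<Rightarrow> nat \<Rightarrow> real" where
  "weighted_degree n a \<theta> i = (\<Sum>j\<in>{..<n} - {i}. adjacency a i j * psi' (\<theta> i - \<theta> j))"

definition residual_weight :: "nat \<Rightarrow> (nat \<times> nat \<Rightarrow> bool) \<Rightarrow> (nat \<Rightarrow> real) \<Rightarrow> nat \<times> nat \<Rightarrow> real" where
  "residual_weight n a \<theta> q = 1 / weighted_degree n a \<theta> (fst q) - 1 / weighted_degree n a \<theta> (snd q)"

definition residual_term ::
    "nat \<Rightarrow> (nat \<Rightarrow> real) \<Rightarrow> (nat \<times> nat \<Rightarrow> real) \<Rightarrow> nat \<times> nat \<Rightarrow> bool \<times> (nat \<Rightarrow> bool) \<Rightarrow> real" where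
  "residual_term L \<theta> c q e
      = of_bool (fst e) * c q * (sample_mean L (snd e) - psi (\<theta> (fst q) - \<theta> (snd q)))"

lemma dcoef_eq_weighted_degree: "dcoef n \<omega> \<theta> i = weighted_degree n (\<lambda>q. fst (\<omega> q)) \<theta> i"
  unfolding dcoef_def weighted_degree_def Aadj_eq_adjacency ..

lemma weighted_degree_cong:
  assumes "\<And>q. q \<in> pairs n \<Longrightarrow> a q = a' q" "i < n"
  shows "weighted_degree n a \<theta> i = weighted_degree n a' \<theta> i"
  unfolding weighted_degree_def adjacency_def using assms by (intro sum.cong) (auto simp: pairs_def)

lemma residual_sum_eq_on_set_btl_given_edges:
  assumes \<omega>: "\<omega> \<in> set_pmf (btl_given_edges n L \<theta> a)"
  shows "residual_sum n L \<omega> \<theta> = (\<Sum>q\<in>pairs n. residual_term L \<theta> (residual_weight n a \<theta>) q (\<omega> q))"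
  unfolding residual_sum_def
proof (intro sum.cong refl, clarify)
  fix i j assume "(i, j) \<in> pairs n"
  then have ij: "i < j" "j < n" by (auto simp: pairs_def)
  have "weighted_degree n (\<lambda>q. fst (\<omega> q)) \<theta> k = weighted_degree n a \<theta> k" if "k < n" for k
    using edge_on_set_btl_given_edges[OF \<omega>] that by (intro weighted_degree_cong) auto
  then show "Aadj \<omega> i j * (ybar L \<omega> i j - psi (\<theta> i - \<theta> j)) * (1 / dcoef n \<omega> \<theta> i - 1 / dcoef n \<omega> \<theta> j)
      = residual_term L \<theta> (residual_weight n a \<theta>) (i, j) (\<omega> (i, j))"
    using ij by (simp add: Aadj_def ybar_eq_sample_mean residual_term_def residual_weight_def
        dcoef_eq_weighted_degree)
qed

lemma mgf_residual_terms_le: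
  assumes L: "1 \<le> L"
  shows "measure_pmf.expectation (btl_given_edges n L \<theta> a)
           (\<lambda>\<omega>. exp (s * (\<Sum>q\<in>pairs n. residual_term L \<theta> c q (\<omega> q))))
         \<le> exp (s\<^sup>2 * ((\<Sum>q\<in>pairs n. of_bool (a q) * (c q)\<^sup>2) / real L) / 8)"
proof -
  let ?E = "\<lambda>q. measure_pmf.expectation (map_pmf (Pair (a q)) (comparisons_pmf L \<theta> q))
                  (\<lambda>e. exp (s * residual_term L \<theta> c q e))"
  have "measure_pmf.expectation (btl_given_edges n L \<theta> a)
          (\<lambda>\<omega>. exp (s * (\<Sum>q\<in>pairs n. residual_term L \<theta> c q (\<omega> q)))) = (\<Prod>q\<in>pairs n. ?E q)"
    unfolding btl_given_edges_def sum_distrib_left exp_sum[OF finite_pairs]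
    by (intro expectation_prod_Pi_pmf finite_pairs integrable_measure_pmf_finite)
      (auto simp: finite_set_comparisons_pmf)
  also have "\<dots> \<le> (\<Prod>q\<in>pairs n. exp (s\<^sup>2 * (of_bool (a q) * (c q)\<^sup>2) / (8 * real L)))"
  proof (intro prod_mono conjI)
    fix q
    show "0 \<le> ?E q" by (intro integral_nonneg_AE AE_pmfI) auto
    show "?E q \<le> exp (s\<^sup>2 * (of_bool (a q) * (c q)\<^sup>2) / (8 * real L))"
    proof (cases "a q")
      case False
      then show ?thesis by (simp add: residual_term_def)
    next
      case True
      then have "?E q = measure_pmf.expectation (comparisons_pmf L \<theta> q)
          (\<lambda>y. exp (s * c q * (sample_mean L y - psi (\<theta> (fst q) - \<theta> (snd q)))))"
        by (simp add: residual_term_def mult.assoc)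
      also have "\<dots> \<le> exp ((s * c q)\<^sup>2 / (8 * real L))"
        unfolding comparisons_pmf_def
        by (intro mgf_sample_mean_le L less_imp_le[OF psi_gt_0] less_imp_le[OF psi_lt_1])
      finally show ?thesis using True by (simp add: power_mult_distrib)
    qed
  qed
  also have "\<dots> = exp (\<Sum>q\<in>pairs n. s\<^sup>2 * (of_bool (a q) * (c q)\<^sup>2) / (8 * real L))"
    by (simp add: exp_sum[OF finite_pairs])
  also have "\<dots> = exp (s\<^sup>2 * ((\<Sum>q\<in>pairs n. of_bool (a q) * (c q)\<^sup>2) / real L) / 8)"
    by (subst sum_divide_distrib[symmetric], subst sum_distrib_left[symmetric]) (simp add: field_simps)
  finally show ?thesis .
qed

lemma weighted_degree_ge:
  assumes "\<And>j. j < n \<Longrightarrow> m \<le> psi' (\<theta> i - \<theta> j)"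
  shows "m * node_degree n a i \<le> weighted_degree n a \<theta> i"
proof -
  have "m * node_degree n a i = (\<Sum>j\<in>{..<n} - {i}. adjacency a i j * m)"
    unfolding node_degree_def by (simp add: sum_distrib_left mult.commute)
  also have "\<dots> \<le> weighted_degree n a \<theta> i"
    unfolding weighted_degree_def using assms by (intro sum_mono mult_left_mono adjacency_nonneg) auto
  finally show ?thesis .
qed

lemma sum_sq_residual_weight_le_sum_degree:
  "(\<Sum>q\<in>pairs n. of_bool (a q) * (residual_weight n a \<theta> q)\<^sup>2)
     \<le> (\<Sum>i<n. 2 * node_degree n a i / (weighted_degree n a \<theta> i)\<^sup>2)"
proof -
  define d where "d i = weighted_degree n a \<theta> i" for i
  define F where "F i j = 2 * adjacency a i j / (d i)\<^sup>2" for i j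
  have "(\<Sum>q\<in>pairs n. of_bool (a q) * (residual_weight n a \<theta> q)\<^sup>2) \<le> (\<Sum>(i, j)\<in>pairs n. F i j + F j i)"
    unfolding case_prod_unfold
  proof (intro sum_mono)
    fix q assume "q \<in> pairs n"
    then obtain i j where ij: "q = (i, j)" "i < j" by (auto simp: pairs_def)
    have "(1 / d i - 1 / d j)\<^sup>2 \<le> 2 * (1 / d i)\<^sup>2 + 2 * (1 / d j)\<^sup>2"
      by (smt (verit) power2_diff sum_squares_ge_zero zero_le_power2 power2_sum)
    then have "of_bool (a q) * (residual_weight n a \<theta> q)\<^sup>2 \<le> of_bool (a q) * (2 / (d i)\<^sup>2 + 2 / (d j)\<^sup>2)"
      using ij unfolding residual_weight_def d_def by (intro mult_left_mono) (auto simp: power_divide)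
    also have "\<dots> = F (fst q) (snd q) + F (snd q) (fst q)"
      using ij unfolding F_def adjacency_def by (simp add: field_simps)
    finally show "of_bool (a q) * (residual_weight n a \<theta> q)\<^sup>2 \<le> F (fst q) (snd q) + F (snd q) (fst q)" .
  qed
  also have "\<dots> = (\<Sum>i<n. 2 * node_degree n a i / (d i)\<^sup>2)"
    unfolding sum_offdiag_eq_sum_pairs[symmetric] F_def node_degree_def
    by (simp add: sum_divide_distrib sum_distrib_left)
  finally show ?thesis unfolding d_def .
qed

lemma sum_sq_residual_weight_le:
  assumes m: "0 < m" and psi': "\<And>i j. i < n \<Longrightarrow> j < n \<Longrightarrow> m \<le> psi' (\<theta> i - \<theta> j)"
    and k: "0 < k" and deg: "\<And>i. i < n \<Longrightarrow> k \<le> node_degree n a i"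
  shows "(\<Sum>q\<in>pairs n. of_bool (a q) * (residual_weight n a \<theta> q)\<^sup>2) \<le> 2 * real n / (m\<^sup>2 * k)"
proof -
  have "2 * node_degree n a i / (weighted_degree n a \<theta> i)\<^sup>2 \<le> 2 / (m\<^sup>2 * k)" if i: "i < n" for i
  proof -
    have deg_pos: "0 < node_degree n a i" using deg[OF i] k by simp
    have "m * node_degree n a i \<le> weighted_degree n a \<theta> i" using psi'[OF i] by (rule weighted_degree_ge)
    then have "(m * node_degree n a i)\<^sup>2 \<le> (weighted_degree n a \<theta> i)\<^sup>2"
      using m deg_pos by (intro power_mono) auto
    then have "2 * node_degree n a i / (weighted_degree n a \<theta> i)\<^sup>2
        \<le> 2 * node_degree n a i / (m * node_degree n a i)\<^sup>2"
      using m deg_pos by (intro divide_left_mono mult_pos_pos) auto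
    also have "\<dots> = 2 / (m\<^sup>2 * node_degree n a i)" using deg_pos
      by (simp add: power2_eq_square field_simps)
    also have "\<dots> \<le> 2 / (m\<^sup>2 * k)"
      using deg[OF i] m k by (intro divide_left_mono mult_left_mono mult_pos_pos) auto
    finally show ?thesis .
  qed
  then have "(\<Sum>i<n. 2 * node_degree n a i / (weighted_degree n a \<theta> i)\<^sup>2) \<le> (\<Sum>i<n. 2 / (m\<^sup>2 * k))"
    by (intro sum_mono) auto
  moreover have "(\<Sum>i<n. 2 / (m\<^sup>2 * k)) = 2 * real n / (m\<^sup>2 * k)" by simp
  ultimately show ?thesis
    using sum_sq_residual_weight_le_sum_degree[where a = a and n = n and \<theta> = \<theta>] by linarith
qed

lemma prob_residual_sum_given_edges_le:
  assumes L: "1 \<le> L" and W: "(\<Sum>q\<in>pairs n. of_bool (a q) * (residual_weight n a \<theta> q)\<^sup>2) \<le> W" "0 < W"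
    and t: "0 \<le> t"
  shows "measure_pmf.prob (btl_given_edges n L \<theta> a) {\<omega>. t < \<bar>residual_sum n L \<omega> \<theta>\<bar>}
           \<le> 2 * exp (- 2 * t\<^sup>2 / (W / real L))"
proof -
  let ?M = "btl_given_edges n L \<theta> a"
  let ?X = "\<lambda>\<omega>. \<Sum>q\<in>pairs n. residual_term L \<theta> (residual_weight n a \<theta>) q (\<omega> q)"
  have "measure_pmf.prob ?M {\<omega>. t < \<bar>residual_sum n L \<omega> \<theta>\<bar>}
      = measure_pmf.prob ?M ({\<omega>. t < \<bar>residual_sum n L \<omega> \<theta>\<bar>} \<inter> set_pmf ?M)"
    by (simp add: measure_Int_set_pmf)
  also have "\<dots> \<le> measure_pmf.prob ?M {\<omega>. t \<le> \<bar>?X \<omega>\<bar>}"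
    by (intro measure_pmf.finite_measure_mono) (auto simp: residual_sum_eq_on_set_btl_given_edges)
  also have "\<dots> \<le> 2 * exp (- 2 * t\<^sup>2 / (W / real L))"
  proof (rule prob_abs_ge_le_of_mgf[OF finite_set_btl_given_edges _ t])
    fix s
    have "measure_pmf.expectation ?M (\<lambda>\<omega>. exp (s * ?X \<omega>))
        \<le> exp (s\<^sup>2 * ((\<Sum>q\<in>pairs n. of_bool (a q) * (residual_weight n a \<theta> q)\<^sup>2) / real L) / 8)"
      by (rule mgf_residual_terms_le[OF L])
    also have "\<dots> \<le> exp (s\<^sup>2 * (W / real L) / 8)"
      using W L by (simp add: divide_right_mono mult_left_mono)
    finally show "measure_pmf.expectation ?M (\<lambda>\<omega>. exp (s * ?X \<omega>)) \<le> exp (s\<^sup>2 * (W / real L) / 8)" .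
  qed (use W L in simp)
  finally show ?thesis .
qed

section \<open>Degrees of the comparison graph\<close>

text \<open>The Chernoff parameter is fixed to \<open>ln 2\<close>; this is good enough because \<open>k\<close> will be a
  quarter of the mean.\<close>

lemma prob_count_le:
  assumes A: "finite A" and B: "B \<subseteq> A" and p: "0 \<le> p" "p \<le> 1"
  shows "measure_pmf.prob (Pi_pmf A False (\<lambda>_. bernoulli_pmf p)) {a. real (card {q\<in>B. a q}) \<le> k}
           \<le> 2 powr k * (1 - p / 2) ^ card B"
proof -
  let ?P = "Pi_pmf A False (\<lambda>_. bernoulli_pmf p)"
  define g where "g q e = (if q \<in> B \<and> e then 1 / 2 else (1::real))" for q e
  have product: "exp (ln 2 * - real (card {q\<in>B. a q})) = (\<Prod>q\<in>A. g q (a q))" for a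
  proof -
    have "exp (ln 2 * - real (card {q\<in>B. a q})) = (1 / 2) ^ card {q\<in>B. a q}"
      by (simp add: exp_minus exp_of_nat2_mult power_one_over inverse_eq_divide)
    also have "\<dots> = (\<Prod>q\<in>{q\<in>A. q \<in> B \<and> a q}. 1 / 2)"
    proof -
      have "{q\<in>A. q \<in> B \<and> a q} = {q\<in>B. a q}" using B by auto
      then show ?thesis by simp
    qed
    also have "\<dots> = (\<Prod>q\<in>A. g q (a q))"
      unfolding g_def by (rule prod.inter_filter[OF A])
    finally show ?thesis .
  qed
  have "measure_pmf.expectation ?P (\<lambda>a. exp (ln 2 * - real (card {q\<in>B. a q})))
      = (\<Prod>q\<in>A. measure_pmf.expectation (bernoulli_pmf p) (g q))"
    unfolding product
    by (intro expectation_prod_Pi_pmf A integrable_measure_pmf_finite) (auto simp: g_def)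
  also have "\<dots> = (\<Prod>q\<in>A. if q \<in> B then 1 - p / 2 else 1)"
    using p by (intro prod.cong refl) (auto simp: g_def field_simps)
  also have "\<dots> = (1 - p / 2) ^ card B"
    using A B by (simp add: prod.If_cases Int_absorb1)
  finally have mgf: "measure_pmf.expectation ?P (\<lambda>a. exp (ln 2 * - real (card {q\<in>B. a q})))
      = (1 - p / 2) ^ card B" .
  have "measure_pmf.prob ?P {a. real (card {q\<in>B. a q}) \<le> k}
      = measure_pmf.prob ?P {a. - k \<le> - real (card {q\<in>B. a q})}" by simp
  also have "\<dots> \<le> exp (- ln 2 * - k) *
      measure_pmf.expectation ?P (\<lambda>a. exp (ln 2 * - real (card {q\<in>B. a q})))"
    by (rule prob_ge_le_mgf) (auto intro: finite_set_pmf_Pi_pmf A)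
  also have "\<dots> = 2 powr k * (1 - p / 2) ^ card B"
    unfolding mgf by (simp add: powr_def mult.commute)
  finally show ?thesis .
qed

lemma bij_betw_incident_pairs:
  assumes i: "i < n"
  shows "bij_betw (\<lambda>j. (min i j, max i j)) ({..<n} - {i}) {q \<in> pairs n. fst q = i \<or> snd q = i}"
proof (rule bij_betwI')
  fix x y assume "x \<in> {..<n} - {i}" "y \<in> {..<n} - {i}"
  then show "((min i x, max i x) = (min i y, max i y)) = (x = y)"
    by (auto simp: min_def max_def split: if_splits)
next
  fix x assume "x \<in> {..<n} - {i}"
  then show "(min i x, max i x) \<in> {q \<in> pairs n. fst q = i \<or> snd q = i}"
    using i by (auto simp: pairs_def min_def max_def)
next
  fix q assume q: "q \<in> {q \<in> pairs n. fst q = i \<or> snd q = i}"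
  obtain u v where uv: "q = (u, v)" by force
  show "\<exists>x\<in>{..<n} - {i}. q = (min i x, max i x)"
  proof (cases "u = i")
    case True
    then show ?thesis using q uv by (intro bexI[of _ v]) (auto simp: pairs_def)
  next
    case False
    then show ?thesis using q uv by (intro bexI[of _ u]) (auto simp: pairs_def)
  qed
qed

lemma degree_eq_card:
  assumes "i < n"
  shows "node_degree n a i = real (card {q \<in> {q \<in> pairs n. fst q = i \<or> snd q = i}. a q})"
proof -
  have "node_degree n a i = (\<Sum>j\<in>{..<n} - {i}. of_bool (a (min i j, max i j)))"
    unfolding node_degree_def by (intro sum.cong refl) (auto simp: adjacency_eq_min_max)
  also have "\<dots> = (\<Sum>q\<in>{q \<in> pairs n. fst q = i \<or> snd q = i}. of_bool (a q))"
    by (rule sum.reindex_bij_betw[OF bij_betw_incident_pairs[OF assms]])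
  also have "\<dots> = real (card {q \<in> {q \<in> pairs n. fst q = i \<or> snd q = i}. a q})"
    using finite_pairs by (simp add: Collect_conj_eq Int_assoc)
  finally show ?thesis .
qed

lemma prob_degree_le:
  assumes i: "i < n" and p: "0 \<le> p" "p \<le> 1"
  shows "measure_pmf.prob (edges_pmf n p) {a. node_degree n a i \<le> k} \<le> 2 powr k * (1 - p / 2) ^ (n - 1)"
proof -
  let ?I = "{q \<in> pairs n. fst q = i \<or> snd q = i}"
  have "measure_pmf.prob (edges_pmf n p) {a. real (card {q \<in> ?I. a q}) \<le> k}
      \<le> 2 powr k * (1 - p / 2) ^ card ?I"
    unfolding edges_pmf_def by (rule prob_count_le[OF finite_pairs _ p]) auto
  moreover have "card ?I = n - 1"
    using bij_betw_same_card[OF bij_betw_incident_pairs[OF i]] i by simp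
  ultimately show ?thesis by (simp add: degree_eq_card[OF i])
qed

section \<open>Connectivity of the comparison graph\<close>

definition no_win_into :: "nat \<Rightarrow> nat \<Rightarrow> nat set \<Rightarrow> outcome set" where
  "no_win_into n L S = {\<omega>. \<not> (\<exists>u\<in>{..<n} - S. \<exists>v\<in>S. beats L \<omega> u v)}"

text \<open>A comparison \<open>y l\<close> of the pair \<open>q\<close> is won by \<open>fst q\<close> if it is \<open>True\<close>.\<close>

definition pair_no_win_into :: "nat \<Rightarrow> nat set \<Rightarrow> nat \<times> nat \<Rightarrow> (bool \<times> (nat \<Rightarrow> bool)) set" where
  "pair_no_win_into L S q =
     (if fst q \<notin> S \<and> snd q \<in> S then {(e, y). e \<longrightarrow> (\<forall>l<L. \<not> y l)}
      else if fst q \<in> S \<and> snd q \<notin> S then {(e, y). e \<longrightarrow> (\<forall>l<L. y l)}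
      else UNIV)"

lemma no_win_into_subset: "no_win_into n L S \<subseteq> Pi (pairs n) (pair_no_win_into L S)"
proof (intro subsetI Pi_I)
  fix \<omega> q assume \<omega>: "\<omega> \<in> no_win_into n L S" and "q \<in> pairs n"
  then obtain i j where q: "q = (i, j)" "i < j" "j < n" by (auto simp: pairs_def)
  have "\<not> beats L \<omega> i j" if "i \<notin> S" "j \<in> S" using \<omega> that q by (auto simp: no_win_into_def)
  moreover have "\<not> beats L \<omega> j i" if "j \<notin> S" "i \<in> S" using \<omega> that q by (auto simp: no_win_into_def)
  moreover have "beats L \<omega> i j" if "fst (\<omega> q)" "l < L" "snd (\<omega> q) l" for l
    using that q sample_mean_ge[of l L "snd (\<omega> q)"] by (simp add: beats_def Aadj_def ybar_eq_sample_mean)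
  moreover have "beats L \<omega> j i" if "fst (\<omega> q)" "l < L" "\<not> snd (\<omega> q) l" for l
    using that q sample_mean_le[of l L "snd (\<omega> q)"] by (simp add: beats_def Aadj_def ybar_eq_sample_mean)
  ultimately show "\<omega> q \<in> pair_no_win_into L S q"
    using q by (auto simp: pair_no_win_into_def case_prod_beta)
qed

lemma prob_pair_pmf_Times:
  "measure_pmf.prob (pair_pmf M N) (A \<times> B) = measure_pmf.prob M A * measure_pmf.prob N B"
proof -
  have "(A \<times> B) \<inter> set_pmf (pair_pmf M N) = (A \<inter> set_pmf M) \<times> (B \<inter> set_pmf N)" by auto
  then have "measure_pmf.prob (pair_pmf M N) (A \<times> B)
      = measure_pmf.prob (pair_pmf M N) ((A \<inter> set_pmf M) \<times> (B \<inter> set_pmf N))"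
    using measure_Int_set_pmf[of "pair_pmf M N" "A \<times> B"] by simp
  also have "\<dots> = measure_pmf.prob M (A \<inter> set_pmf M) * measure_pmf.prob N (B \<inter> set_pmf N)"
    by (intro measure_pmf_prob_product countable_Int2 countable_set_pmf)
  finally show ?thesis by (simp add: measure_Int_set_pmf)
qed

lemma prob_comparisons_won:
  assumes "1 \<le> L"
  shows "psi (\<theta> (fst q) - \<theta> (snd q)) \<le> measure_pmf.prob (comparisons_pmf L \<theta> q) {y. \<exists>l<L. y l}"
    and "psi (\<theta> (snd q) - \<theta> (fst q)) \<le> measure_pmf.prob (comparisons_pmf L \<theta> q) {y. \<exists>l<L. \<not> y l}"
proof -
  let ?r = "psi (\<theta> (fst q) - \<theta> (snd q))"
  have first: "map_pmf (\<lambda>y. y 0) (comparisons_pmf L \<theta> q) = bernoulli_pmf ?r"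
    unfolding comparisons_pmf_def using assms by (subst Pi_pmf_component) auto
  have psi_bounds: "0 \<le> ?r" "?r \<le> 1" using psi_gt_0 psi_lt_1 less_imp_le by blast+
  have "?r = measure_pmf.prob (map_pmf (\<lambda>y. y 0) (comparisons_pmf L \<theta> q)) {True}"
    unfolding first using psi_bounds by (simp add: measure_pmf_single)
  also have "\<dots> = measure_pmf.prob (comparisons_pmf L \<theta> q) {y. y 0}"
    by (simp add: measure_map_pmf vimage_def)
  also have "\<dots> \<le> measure_pmf.prob (comparisons_pmf L \<theta> q) {y. \<exists>l<L. y l}"
    using assms by (intro measure_pmf.finite_measure_mono) (auto intro!: exI[of _ 0])
  finally show "?r \<le> measure_pmf.prob (comparisons_pmf L \<theta> q) {y. \<exists>l<L. y l}" .
  have "psi (\<theta> (snd q) - \<theta> (fst q))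
      = measure_pmf.prob (map_pmf (\<lambda>y. y 0) (comparisons_pmf L \<theta> q)) {False}"
    unfolding first using psi_bounds psi_minus[of "\<theta> (fst q) - \<theta> (snd q)"]
    by (simp add: measure_pmf_single)
  also have "\<dots> = measure_pmf.prob (comparisons_pmf L \<theta> q) {y. \<not> y 0}"
    by (simp add: measure_map_pmf vimage_def)
  also have "\<dots> \<le> measure_pmf.prob (comparisons_pmf L \<theta> q) {y. \<exists>l<L. \<not> y l}"
    using assms by (intro measure_pmf.finite_measure_mono) (auto intro!: exI[of _ 0])
  finally show "psi (\<theta> (snd q) - \<theta> (fst q))
      \<le> measure_pmf.prob (comparisons_pmf L \<theta> q) {y. \<exists>l<L. \<not> y l}" .
qed

lemma prob_pair_no_win_into_le:
  assumes L: "1 \<le> L" and p: "0 \<le> p" "p \<le> 1" and q: "(fst q \<in> S) \<noteq> (snd q \<in> S)"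
    and m: "m \<le> psi (\<theta> (fst q) - \<theta> (snd q))" "m \<le> psi (\<theta> (snd q) - \<theta> (fst q))"
  shows "measure_pmf.prob (pair_pmf (bernoulli_pmf p) (comparisons_pmf L \<theta> q)) (pair_no_win_into L S q)
           \<le> 1 - p * m"
proof -
  define G where "G = (if snd q \<in> S then {y. \<exists>l<L. y l} else {y. \<exists>l<L. \<not> y l})"
  have no_win: "pair_no_win_into L S q = UNIV - {True} \<times> G"
    using q by (auto simp: pair_no_win_into_def G_def)
  have "m \<le> measure_pmf.prob (comparisons_pmf L \<theta> q) G"
    using prob_comparisons_won[OF L, of \<theta> q] m unfolding G_def by auto
  then have "p * m \<le> measure_pmf.prob (pair_pmf (bernoulli_pmf p) (comparisons_pmf L \<theta> q)) ({True} \<times> G)"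
    using p by (simp add: prob_pair_pmf_Times measure_pmf_single mult_left_mono)
  then show ?thesis
    unfolding no_win by (simp add: measure_pmf.prob_compl[of "{True} \<times> G", simplified])
qed

lemma card_crossing_pairs_ge:
  assumes S: "S \<subseteq> {..<n}"
  shows "card S * (n - card S) \<le> card {q \<in> pairs n. (fst q \<in> S) \<noteq> (snd q \<in> S)}"
proof -
  have "card S * (n - card S) = card (S \<times> ({..<n} - S))"
    using S finite_subset[OF S] by (simp add: card_cartesian_product card_Diff_subset)
  also have "\<dots> \<le> card {q \<in> pairs n. (fst q \<in> S) \<noteq> (snd q \<in> S)}"
  proof (rule card_inj_on_le[where f = "\<lambda>(u, v). (min u v, max u v)"])
    show "inj_on (\<lambda>(u, v). (min u v, max u v)) (S \<times> ({..<n} - S))"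
      by (auto simp: inj_on_def min_def max_def split: if_splits)
    show "(\<lambda>(u, v). (min u v, max u v)) ` (S \<times> ({..<n} - S)) \<subseteq> {q \<in> pairs n. (fst q \<in> S) \<noteq> (snd q \<in> S)}"
    proof (rule image_subsetI)
      fix x assume "x \<in> S \<times> ({..<n} - S)"
      then obtain u v where x: "x = (u, v)" and uv: "u \<in> S" "v < n" "v \<notin> S" by auto
      then have "u < n" "u \<noteq> v" using S by auto
      then show "(\<lambda>(u, v). (min u v, max u v)) x \<in> {q \<in> pairs n. (fst q \<in> S) \<noteq> (snd q \<in> S)}"
        using x uv by (cases "u < v") (auto simp: pairs_def min_def max_def)
    qed
    show "finite {q \<in> pairs n. (fst q \<in> S) \<noteq> (snd q \<in> S)}" using finite_pairs by auto
  qed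
  finally show ?thesis .
qed

lemma prob_no_win_into_le:
  assumes L: "1 \<le> L" and p: "0 \<le> p" "p \<le> 1" and m: "0 \<le> m" "p * m \<le> 1"
    and psi: "\<And>i j. i < n \<Longrightarrow> j < n \<Longrightarrow> m \<le> psi (\<theta> i - \<theta> j)" and S: "S \<subseteq> {..<n}"
  shows "measure_pmf.prob (btl_pmf n p L \<theta>) (no_win_into n L S) \<le> (1 - p * m) ^ (card S * (n - card S))"
proof -
  define C where "C = {q \<in> pairs n. (fst q \<in> S) \<noteq> (snd q \<in> S)}"
  have "measure_pmf.prob (btl_pmf n p L \<theta>) (no_win_into n L S)
      \<le> measure_pmf.prob (btl_pmf n p L \<theta>) (Pi (pairs n) (pair_no_win_into L S))"
    by (intro measure_pmf.finite_measure_mono no_win_into_subset) auto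
  also have "\<dots> = (\<Prod>q\<in>pairs n. measure_pmf.prob (pair_pmf (bernoulli_pmf p) (comparisons_pmf L \<theta> q))
                                  (pair_no_win_into L S q))"
    unfolding btl_pmf_eq_Pi_pmf by (rule measure_Pi_pmf_Pi[OF finite_pairs])
  also have "\<dots> \<le> (\<Prod>q\<in>pairs n. if q \<in> C then 1 - p * m else 1)"
  proof (intro prod_mono conjI)
    fix q assume q: "q \<in> pairs n"
    then have "fst q < n" "snd q < n" by (auto simp: pairs_def)
    then show "measure_pmf.prob (pair_pmf (bernoulli_pmf p) (comparisons_pmf L \<theta> q))
        (pair_no_win_into L S q) \<le> (if q \<in> C then 1 - p * m else 1)"
      unfolding C_def by (simp add: prob_pair_no_win_into_le[OF L p] psi)
  qed auto
  also have "\<dots> = (1 - p * m) ^ card C"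
    unfolding prod.inter_filter[OF finite_pairs, symmetric] by (simp add: C_def)
  also have "\<dots> \<le> (1 - p * m) ^ (card S * (n - card S))"
    using card_crossing_pairs_ge[OF S] m p unfolding C_def by (intro power_decreasing) auto
  finally show ?thesis .
qed

lemma prob_not_beats_connected_le:
  assumes L: "1 \<le> L" and p: "0 \<le> p" "p \<le> 1" and m: "0 \<le> m" "p * m \<le> 1"
    and psi: "\<And>i j. i < n \<Longrightarrow> j < n \<Longrightarrow> m \<le> psi (\<theta> i - \<theta> j)"
  shows "measure_pmf.prob (btl_pmf n p L \<theta>) {\<omega>. \<not> beats_connected n L \<omega>}
           \<le> (\<Sum>S\<in>cuts n. (1 - p * m) ^ (card S * (n - card S)))"
proof -
  have "measure_pmf.prob (btl_pmf n p L \<theta>) {\<omega>. \<not> beats_connected n L \<omega>}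
      \<le> measure_pmf.prob (btl_pmf n p L \<theta>) (\<Union>S\<in>cuts n. no_win_into n L S)"
    by (intro measure_pmf.finite_measure_mono)
      (auto simp: beats_connected_def no_win_into_def cuts_def)
  also have "\<dots> \<le> (\<Sum>S\<in>cuts n. measure_pmf.prob (btl_pmf n p L \<theta>) (no_win_into n L S))"
    by (intro measure_UNION_le finite_cuts) auto
  also have "\<dots> \<le> (\<Sum>S\<in>cuts n. (1 - p * m) ^ (card S * (n - card S)))"
    by (intro sum_mono prob_no_win_into_le[OF L p m psi]) (auto simp: cuts_def)
  finally show ?thesis .
qed

lemma one_minus_pow_cut_le:
  fixes x :: real
  assumes x: "0 \<le> x" "x \<le> 1" and k: "k \<le> n"
  shows "(1 - x) ^ (k * (n - k)) \<le> exp (- x * real n / 2) ^ k + exp (- x * real n / 2) ^ (n - k)"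
proof -
  define j where "j = min k (n - k)"
  have "real n / 2 * real j \<le> real (k * (n - k))"
  proof (cases "k \<le> n - k")
    case True
    then have "real n / 2 * real k \<le> real (n - k) * real k" using k by (intro mult_right_mono) auto
    then show ?thesis using True unfolding j_def by (simp add: mult.commute)
  next
    case False
    then have "real n / 2 * real (n - k) \<le> real k * real (n - k)" using k by (intro mult_right_mono) auto
    then show ?thesis using False unfolding j_def by simp
  qed
  then have "- x * real (k * (n - k)) \<le> - x * (real n / 2 * real j)"
    using x by (intro mult_left_mono_neg) auto
  have "(1 - x) ^ (k * (n - k)) \<le> exp (- x) ^ (k * (n - k))"
    using x by (intro power_mono) (auto simp: exp_ge_add_one_self[of "- x", simplified])
  also have "\<dots> = exp (- x * real (k * (n - k)))"
    by (simp add: exp_of_nat_mult[symmetric] mult.commute)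
  also have "\<dots> \<le> exp (- x * (real n / 2 * real j))"
    using \<open>- x * real (k * (n - k)) \<le> - x * (real n / 2 * real j)\<close> by simp
  also have "\<dots> = exp (- x * real n / 2) ^ j" by (simp add: exp_of_nat_mult[symmetric] algebra_simps)
  also have "\<dots> \<le> exp (- x * real n / 2) ^ k + exp (- x * real n / 2) ^ (n - k)"
    unfolding j_def by (cases "k \<le> n - k") (auto simp: min_def)
  finally show ?thesis .
qed

text \<open>Complementation of cuts turns the second half of the bound of \<open>one_minus_pow_cut_le\<close>
  into the first, and the sum of \<open>y ^ card S\<close> over nonempty \<open>S\<close> is \<open>(1 + y) ^ n - 1 \<le> 2 n y\<close>.\<close>

lemma sum_cuts_le:
  fixes x :: real
  assumes x: "0 \<le> x" "x \<le> 1" and small: "real n * exp (- x * real n / 2) \<le> 1 / 2"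
  shows "(\<Sum>S\<in>cuts n. (1 - x) ^ (card S * (n - card S))) \<le> 4 * real n * exp (- x * real n / 2)"
proof -
  define y where "y = exp (- x * real n / 2)"
  have y: "0 \<le> y" unfolding y_def by simp
  have "(\<Sum>S\<in>cuts n. (1 - x) ^ (card S * (n - card S))) \<le> (\<Sum>S\<in>cuts n. y ^ card S + y ^ (n - card S))"
    unfolding y_def using card_mono[of "{..<n}"]
    by (intro sum_mono one_minus_pow_cut_le x) (auto simp: cuts_def)
  also have "\<dots> = (\<Sum>S\<in>cuts n. y ^ card S) + (\<Sum>S\<in>cuts n. y ^ (n - card S))"
    by (rule sum.distrib)
  also have "(\<Sum>S\<in>cuts n. y ^ (n - card S)) = (\<Sum>S\<in>cuts n. y ^ card S)"
  proof -
    have "bij_betw (\<lambda>S. {..<n} - S) (cuts n) (cuts n)"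
      by (rule bij_betwI[where g = "\<lambda>S. {..<n} - S"]) (auto simp: cuts_def)
    then have "(\<Sum>S\<in>cuts n. y ^ card S) = (\<Sum>S\<in>cuts n. y ^ card ({..<n} - S))"
      by (rule sum.reindex_bij_betw[symmetric])
    also have "\<dots> = (\<Sum>S\<in>cuts n. y ^ (n - card S))"
      by (intro sum.cong refl) (auto simp: cuts_def card_Diff_subset finite_subset)
    finally show ?thesis by simp
  qed
  also have "(\<Sum>S\<in>cuts n. y ^ card S) \<le> (\<Sum>S\<in>Pow {..<n} - {{}}. y ^ card S)"
    using y by (intro sum_mono2) (auto simp: cuts_def)
  also have "\<dots> = (1 + y) ^ n - 1"
    using prod_add[of "{..<n}" "\<lambda>_. y" "\<lambda>_. 1"] by (simp add: sum_diff1 add.commute)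
  also have "(1 + y) ^ n - 1 \<le> 2 * (real n * y)"
  proof -
    have "(1 + y) ^ n \<le> exp y ^ n" using y by (intro power_mono) auto
    then have "(1 + y) ^ n \<le> exp (real n * y)" by (simp add: exp_of_nat_mult)
    then show ?thesis
      using real_exp_bound_lemma[of "real n * y"] small y unfolding y_def by auto
  qed
  finally show ?thesis unfolding y_def by simp
qed

lemma exp_minus_mult_ln:
  assumes "1 \<le> n" shows "exp (- real k * ln (real n)) = 1 / real n ^ k"
proof -
  have "exp (real k * ln (real n)) = real n ^ k"
    using assms by (simp add: exp_of_nat_mult)
  then show ?thesis by (simp add: exp_minus field_simps)
qed

lemma prob_low_degree_le:
  assumes n: "2 \<le> n" and p: "0 < p" "p \<le> 1" and dense: "88 * ln (real n) \<le> real n * p"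
  shows "measure_pmf.prob (edges_pmf n p) {a. \<exists>i<n. node_degree n a i \<le> real (n - 1) * p / 4}
           \<le> 1 / real n ^ 10"
proof -
  define k where "k = real (n - 1) * p / 4"
  have k: "11 * ln (real n) \<le> k"
  proof -
    have "real n \<le> 2 * real (n - 1)" using n by linarith
    then have "real n * p \<le> 2 * real (n - 1) * p" using p by (intro mult_right_mono) auto
    then show ?thesis using dense unfolding k_def by simp
  qed
  have "2 powr k * (1 - p / 2) ^ (n - 1) \<le> exp k * exp (- 2 * k)"
  proof (rule mult_mono)
    have "0 \<le> k" using k n by (simp add: order_trans[OF _ k])
    then have "k * ln 2 \<le> k" using ln_2_less_1 by (intro mult_right_le_one_le) auto
    then show "2 powr k \<le> exp k" by (simp add: powr_def)
    have "(1 - p / 2) ^ (n - 1) \<le> exp (- p / 2) ^ (n - 1)"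
      using p by (intro power_mono) (auto simp: exp_ge_add_one_self[of "- p / 2", simplified])
    then show "(1 - p / 2) ^ (n - 1) \<le> exp (- 2 * k)"
      by (simp add: k_def exp_of_nat_mult[symmetric] algebra_simps)
  qed (use p in auto)
  also have "\<dots> \<le> exp (- real (11::nat) * ln (real n))"
    using k by (simp add: exp_add[symmetric])
  also have "\<dots> = 1 / real n ^ 11" using n by (intro exp_minus_mult_ln) auto
  finally have each: "2 powr k * (1 - p / 2) ^ (n - 1) \<le> 1 / real n ^ 11" .
  have "measure_pmf.prob (edges_pmf n p) {a. \<exists>i<n. node_degree n a i \<le> k}
      = measure_pmf.prob (edges_pmf n p) (\<Union>i<n. {a. node_degree n a i \<le> k})"
    by (rule arg_cong[where f = "measure_pmf.prob _"]) auto
  also have "\<dots> \<le> (\<Sum>i<n. measure_pmf.prob (edges_pmf n p) {a. node_degree n a i \<le> k})"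
    by (rule measure_UNION_le) auto
  also have "\<dots> \<le> (\<Sum>i<n. 1 / real n ^ 11)"
    using p by (intro sum_mono order_trans[OF prob_degree_le each]) auto
  also have "\<dots> = 1 / real n ^ 10" using n by (simp add: power_eq_if)
  finally show ?thesis unfolding k_def .
qed

lemma prob_not_beats_connected_small:
  assumes n: "2 \<le> n" and L: "1 \<le> L" and p: "0 < p" "p \<le> 1" and K: "0 \<le> K"
    and \<theta>: "\<And>i j. i < n \<Longrightarrow> j < n \<Longrightarrow> \<bar>\<theta> i - \<theta> j\<bar> \<le> K"
    and dense: "44 * exp K * ln (real n) \<le> real n * p"
  shows "measure_pmf.prob (btl_pmf n p L \<theta>) {\<omega>. \<not> beats_connected n L \<omega>} \<le> 4 / real n ^ 10"
proof -
  define m where "m = 1 / (2 * exp K)"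
  have "1 \<le> exp K" using K by simp
  then have m: "0 \<le> m" "m \<le> 1" unfolding m_def by (simp_all del: one_le_exp_iff)
  have x: "0 \<le> p * m" "p * m \<le> 1" using p m by (auto simp: mult_le_one)
  have "exp (- (p * m) * real n / 2) \<le> exp (- real (11::nat) * ln (real n))"
    using dense by (simp add: m_def field_simps)
  also have "\<dots> = 1 / real n ^ 11" using n by (intro exp_minus_mult_ln) auto
  finally have "real n * exp (- (p * m) * real n / 2) \<le> real n * (1 / real n ^ 11)"
    using n by (intro mult_left_mono) auto
  also have "\<dots> = 1 / real n ^ 10" using n by (simp add: power_eq_if)
  finally have tail: "real n * exp (- (p * m) * real n / 2) \<le> 1 / real n ^ 10" .
  moreover have "1 / real n ^ 10 \<le> 1 / 2"
    using n by (simp add: self_le_power order_trans[of 2 "real n"])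
  ultimately have small: "real n * exp (- (p * m) * real n / 2) \<le> 1 / 2" by linarith
  have "measure_pmf.prob (btl_pmf n p L \<theta>) {\<omega>. \<not> beats_connected n L \<omega>}
      \<le> (\<Sum>S\<in>cuts n. (1 - p * m) ^ (card S * (n - card S)))"
    using p \<theta> by (intro prob_not_beats_connected_le L x(2) m(1)) (auto simp: m_def psi_ge)
  also have "\<dots> \<le> 4 * real n * exp (- (p * m) * real n / 2)" by (rule sum_cuts_le[OF x small])
  also have "\<dots> \<le> 4 / real n ^ 10" using tail by simp
  finally show ?thesis .
qed

lemma prob_residual_sum_large:
  assumes n: "2 \<le> n" and L: "1 \<le> L" and p: "0 < p" "p \<le> 1" and K: "0 \<le> K"
    and \<theta>: "\<And>i j. i < n \<Longrightarrow> j < n \<Longrightarrow> \<bar>\<theta> i - \<theta> j\<bar> \<le> K"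
    and dense: "88 * ln (real n) \<le> real n * p"
  shows "measure_pmf.prob (btl_pmf n p L \<theta>)
           {\<omega>. 36 * exp K * sqrt (ln (real n) / (p * real L)) < \<bar>residual_sum n L \<omega> \<theta>\<bar>}
         \<le> 3 / real n ^ 10"
proof -
  define t where "t = 36 * exp K * sqrt (ln (real n) / (p * real L))"
  define m where "m = 1 / (4 * exp K)"
  define k where "k = real (n - 1) * p / 4"
  define W where "W = 2 * real n / (m\<^sup>2 * k)"
  define Low where "Low = {a. \<exists>i<n. node_degree n a i \<le> k}"
  have ln_n: "0 \<le> ln (real n)" using n by simp
  have t: "0 \<le> t" using ln_n p by (simp add: t_def)
  have k: "0 < k" using n p by (simp add: k_def)
  have W: "0 < W" using k n by (simp add: W_def m_def)
  have tail: "2 * exp (- 2 * t\<^sup>2 / (W / real L)) \<le> 2 / real n ^ 10"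
  proof -
    have "real n \<le> 2 * real (n - 1)" using n by linarith
    have "2 * t\<^sup>2 / (W / real L) = 81 / 4 * ln (real n) * (real (n - 1) / real n)"
      using n p L ln_n by (simp add: t_def W_def m_def k_def power_mult_distrib field_simps)
    also have "\<dots> \<ge> real (10::nat) * ln (real n)"
      using \<open>real n \<le> 2 * real (n - 1)\<close> n ln_n by (simp add: field_simps mult_left_mono)
    finally have "exp (- 2 * t\<^sup>2 / (W / real L)) \<le> exp (- real (10::nat) * ln (real n))" by simp
    also have "\<dots> = 1 / real n ^ 10" using n by (intro exp_minus_mult_ln) auto
    finally show ?thesis by simp
  qed
  have "measure_pmf.prob (btl_pmf n p L \<theta>) {\<omega>. t < \<bar>residual_sum n L \<omega> \<theta>\<bar>}
      \<le> measure_pmf.prob (edges_pmf n p) Low + 2 / real n ^ 10"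
    unfolding btl_pmf_eq_bind
  proof (rule prob_bind_pmf_le)
    fix a assume "a \<notin> Low"
    then have "k \<le> node_degree n a i" if "i < n" for i using that by (auto simp: Low_def)
    then have "(\<Sum>q\<in>pairs n. of_bool (a q) * (residual_weight n a \<theta> q)\<^sup>2) \<le> W"
      unfolding W_def using \<theta> by (intro sum_sq_residual_weight_le k) (auto simp: m_def psi'_ge)
    then show "measure_pmf.prob (btl_given_edges n L \<theta> a) {\<omega>. t < \<bar>residual_sum n L \<omega> \<theta>\<bar>}
        \<le> 2 / real n ^ 10"
      using prob_residual_sum_given_edges_le[OF L _ W t] tail by (meson order_trans)
  qed simp
  also have "measure_pmf.prob (edges_pmf n p) Low \<le> 1 / real n ^ 10"
    unfolding Low_def k_def by (rule prob_low_degree_le[OF n p dense])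
  finally show ?thesis unfolding t_def by simp
qed

lemma abs_mean_delta_le:
  assumes n: "2 \<le> n" and L: "1 \<le> L" and p: "0 < p" and centred: "(\<Sum>i<n. \<theta> i) = 0"
    and \<theta>h: "\<theta>h \<in> mle_set n L \<omega>"
    and residual: "\<bar>residual_sum n L \<omega> \<theta>\<bar> \<le> C * sqrt (ln (real n) / (p * real L))"
  shows "\<bar>(1 / real n) * (\<Sum>i<n. delta n L \<omega> \<theta> \<theta>h i)\<bar>
           \<le> C * (1 / sqrt (real n * p * real L)) * sqrt (ln (real n) / real n)"
proof -
  have "\<bar>(1 / real n) * (\<Sum>i<n. delta n L \<omega> \<theta> \<theta>h i)\<bar> = \<bar>residual_sum n L \<omega> \<theta>\<bar> / real n"
    using n by (simp add: sum_delta_eq[OF \<theta>h centred] abs_mult)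
  also have "\<dots> \<le> C * sqrt (ln (real n) / (p * real L)) / real n"
    using residual n by (simp add: divide_right_mono)
  also have "\<dots> = C * (1 / sqrt (real n * p * real L) * sqrt (ln (real n) / real n))"
    using n p L by (simp add: real_sqrt_divide real_sqrt_mult field_simps)
  finally show ?thesis by (simp add: mult.assoc)
qed

lemma prob_mle_deviation_bound:
  assumes n: "2 \<le> n" and L: "1 \<le> L" and p: "0 < p" "p \<le> 1" and K: "0 \<le> K"
    and \<theta>: "\<And>i j. i < n \<Longrightarrow> j < n \<Longrightarrow> \<bar>\<theta> i - \<theta> j\<bar> \<le> K" and centred: "(\<Sum>i<n. \<theta> i) = 0"
    and dense: "88 * exp K * ln (real n) \<le> real n * p"
  shows "1 - 7 / real n ^ 10 \<le> measure_pmf.prob (btl_pmf n p L \<theta>)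
           {\<omega>. mle_set n L \<omega> \<noteq> {} \<and>
                (\<forall>\<theta>h\<in>mle_set n L \<omega>. \<bar>(1 / real n) * (\<Sum>i<n. delta n L \<omega> \<theta> \<theta>h i)\<bar>
                   \<le> 36 * exp K * (1 / sqrt (real n * p * real L)) * sqrt (ln (real n) / real n))}"
    (is "_ \<le> measure_pmf.prob ?M ?Good")
proof -
  define t where "t = 36 * exp K * sqrt (ln (real n) / (p * real L))"
  have ln_n: "0 \<le> ln (real n)" using n by simp
  have "ln (real n) \<le> exp K * ln (real n)" using K ln_n by (simp add: mult_le_cancel_right1)
  then have dense_1: "88 * ln (real n) \<le> real n * p" and dense_2: "44 * exp K * ln (real n) \<le> real n * p"
    using dense ln_n by (simp_all add: mult.assoc)
  have "\<omega> \<in> ?Good"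
    if "\<omega> \<notin> {\<omega>. \<not> beats_connected n L \<omega>} \<union> {\<omega>. t < \<bar>residual_sum n L \<omega> \<theta>\<bar>}" for \<omega>
  proof -
    from that have conn: "beats_connected n L \<omega>" and residual: "\<bar>residual_sum n L \<omega> \<theta>\<bar> \<le> t"
      by (simp_all add: not_less)
    show ?thesis
      using mle_set_nonempty[OF L conn] abs_mean_delta_le[OF n L p(1) centred _ residual[unfolded t_def]]
      by blast
  qed
  then have "UNIV - ?Good \<subseteq> {\<omega>. \<not> beats_connected n L \<omega>} \<union> {\<omega>. t < \<bar>residual_sum n L \<omega> \<theta>\<bar>}"
    by blast
  then have "measure_pmf.prob ?M (UNIV - ?Good)
      \<le> measure_pmf.prob ?M {\<omega>. \<not> beats_connected n L \<omega>}
        + measure_pmf.prob ?M {\<omega>. t < \<bar>residual_sum n L \<omega> \<theta>\<bar>}"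
    by (intro order_trans[OF measure_pmf.finite_measure_mono measure_Un_le]) auto
  also have "\<dots> \<le> 4 / real n ^ 10 + 3 / real n ^ 10"
    using prob_not_beats_connected_small[OF n L p K \<theta> dense_2]
      prob_residual_sum_large[OF n L p K \<theta> dense_1] unfolding t_def by (rule add_mono)
  finally show ?thesis using measure_pmf.prob_compl[of ?Good ?M] by simp
qed

lemma eventually_ln_le_mult:
  fixes p :: "nat \<Rightarrow> real"
  assumes dense: "(\<lambda>n. ln (real n) / (real n * p n)) \<longlonglongrightarrow> 0" and p: "\<And>n. 0 < p n" and c: "0 < c"
  shows "\<forall>\<^sub>F n in sequentially. c * ln (real n) \<le> real n * p n"
proof -
  have c': "0 < 1 / c" using c by simp
  show ?thesis using order_tendstoD(2)[OF dense c'] eventually_ge_at_top[of "1::nat"]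
  proof eventually_elim
    case (elim n)
    then have "0 < real n * p n" using p by simp
    then show ?case using elim c by (simp add: field_simps)
  qed
qed

theorem lemma5p3:
  fixes p :: "nat \<Rightarrow> real" and L :: "nat \<Rightarrow> nat" and \<kappa> :: "nat \<Rightarrow> real"
    and \<theta>s :: "nat \<Rightarrow> nat \<Rightarrow> real" and K :: real
  assumes p_range: "\<And>n. 0 < p n \<and> p n \<le> 1"
    and L_pos: "\<And>n. L n \<ge> 1"
    and kappa_pos: "\<And>n. \<kappa> n > 0"
    and kappa_bdd: "\<And>n. \<kappa> n \<le> K"
    and theta_in: "\<And>n. \<theta>s n \<in> Theta n (\<kappa> n)"
    and dense: "(\<lambda>n. ln (real n) / (real n * p n)) \<longlonglongrightarrow> 0"
  shows "\<exists>C C'. \<forall>\<^sub>F n in sequentially. n \<ge> 2 \<and>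
    measure_pmf.prob (btl_pmf n (p n) (L n) (\<theta>s n))
      {\<omega>. mle_set n (L n) \<omega> \<noteq> {} \<and>
           (\<forall>\<theta>h\<in>mle_set n (L n) \<omega>.
              \<bar>(1 / real n) * (\<Sum>i<n. delta n (L n) \<omega> (\<theta>s n) \<theta>h i)\<bar>
                \<le> C' * (1 / sqrt (real n * p n * real (L n))) * sqrt (ln (real n) / real n))}
      \<ge> 1 - C / real n ^ 10"
proof -
  have K: "0 \<le> K" using kappa_pos[of 0] kappa_bdd[of 0] by linarith
  have \<theta>: "\<bar>\<theta>s n i - \<theta>s n j\<bar> \<le> K" if "i < n" "j < n" for n i j
    using theta_in[of n] kappa_bdd[of n] that unfolding Theta_def by (force simp: abs_le_iff)
  have centred: "(\<Sum>i<n. \<theta>s n i) = 0" for n using theta_in[of n] unfolding Theta_def by simp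
  have "0 < p n" for n using p_range[of n] by simp
  then have ev: "\<forall>\<^sub>F n in sequentially. 88 * exp K * ln (real n) \<le> real n * p n \<and> 2 \<le> n"
    by (intro eventually_conj eventually_ln_le_mult[OF dense] eventually_ge_at_top) auto
  show ?thesis
    by (intro exI[of _ 7] exI[of _ "36 * exp K"] eventually_mono[OF ev] conjI,
        simp, rule prob_mle_deviation_bound[OF _ L_pos _ _ K \<theta> centred]) (use p_range in auto)
qed

end
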